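(* Let $R(z)=\lambda\prod_{k=1}^n\frac{z-z_k}{1-\overline{z_k}z}$ be a finite Blaschke product ($n\ge1$, $\lambda\in\mathbb{T}$, $z_1,\dots,z_n\in\mathbb{D}$), and define on $\mathbb{T}$ $u_1(z)=\frac{\sqrt{1-|z_1|^2}}{1-\overline{z_1}z}$ and $u_i(z)=\frac{\sqrt{1-|z_i|^2}}{1-\overline{z_i}z}\prod_{k=1}^{i-1}\frac{z-z_k}{1-\overline{z_k}z}$ for $i=2,\dots,n$. Then for all $i,j\in\{1,\dots,n\}$, $(T_{u_i}C_R)^*T_{u_j}C_R=\delta_{ij}I$ and $\sum_{i=1}^n T_{u_i}C_R(T_{u_i}C_R)^*=I$ as operators on $H^2$.
   Context: $H^2\subset L^2(\mathbb{T})$ is the Hardy space on the unit circle (identified with that of the unit disk $\mathbb{D}$). For $a\in L^\infty(\mathbb{T})$, $T_a f=P_{H^2}(af)$ is the Toeplitz operator; $C_R f=f\circ R$ is the composition operator on $H^2$. *)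

theory Defs
  imports "HOL-Analysis.Analysis"
begin

text \<open>Elements of the Hardy space H^2 are represented as holomorphic functions on the
open unit disk (values outside the disk are irrelevant).  The n-th Taylor coefficient at 0:\<close>
definition taylor_coeff :: "(complex \<Rightarrow> complex) \<Rightarrow> nat \<Rightarrow> complex" where
  "taylor_coeff f n = (deriv ^^ n) f 0 / of_nat (fact n)"

definition H2 :: "(complex \<Rightarrow> complex) set" where
  "H2 = {f. f holomorphic_on ball 0 1 \<and> summable (\<lambda>n. (cmod (taylor_coeff f n))\<^sup>2)}"

text \<open>Inner product of H^2 (equal to the L^2(T) inner product of boundary values).\<close>
definition h2_inner :: "(complex \<Rightarrow> complex) \<Rightarrow> (complex \<Rightarrow> complex) \<Rightarrow> complex" where
  "h2_inner f g = (\<Sum>n. taylor_coeff f n * cnj (taylor_coeff g n))"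

definition fourier_coeff :: "(complex \<Rightarrow> complex) \<Rightarrow> int \<Rightarrow> complex" where
  "fourier_coeff a k = integral {0..2*pi} (\<lambda>t. a (cis t) * cis (- of_int k * t)) / (2 * pi)"

text \<open>Toeplitz operator T_a f = P_{H^2}(a f): the m-th Fourier coefficient of a f is
  sum over n of a^(m-n) f_n; the projection keeps m >= 0.\<close>
definition toeplitz :: "(complex \<Rightarrow> complex) \<Rightarrow> (complex \<Rightarrow> complex) \<Rightarrow> (complex \<Rightarrow> complex)" where
  "toeplitz a f = (\<lambda>z. \<Sum>m. (\<Sum>n. fourier_coeff a (int m - int n) * taylor_coeff f n) * z ^ m)"

definition comp_op :: "(complex \<Rightarrow> complex) \<Rightarrow> (complex \<Rightarrow> complex) \<Rightarrow> (complex \<Rightarrow> complex)" where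
  "comp_op R f = (\<lambda>z. f (R z))"

text \<open>Hilbert-space adjoint on H^2 (normalised to vanish off the open disk, so it is unique).\<close>
definition h2_adjoint ::
  "((complex \<Rightarrow> complex) \<Rightarrow> (complex \<Rightarrow> complex)) \<Rightarrow> (complex \<Rightarrow> complex) \<Rightarrow> (complex \<Rightarrow> complex)" where
  "h2_adjoint A g = (THE h. h \<in> H2 \<and> (\<forall>z. z \<notin> ball 0 1 \<longrightarrow> h z = 0) \<and>
                          (\<forall>f\<in>H2. h2_inner (A f) g = h2_inner f h))"

definition blaschke :: "complex \<Rightarrow> (nat \<Rightarrow> complex) \<Rightarrow> nat \<Rightarrow> complex \<Rightarrow> complex" where
  "blaschke lam zs n z = lam * (\<Prod>k=1..n. (z - zs k) / (1 - cnj (zs k) * z))"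

definition ufun :: "(nat \<Rightarrow> complex) \<Rightarrow> nat \<Rightarrow> complex \<Rightarrow> complex" where
  "ufun zs i z = complex_of_real (sqrt (1 - (cmod (zs i))\<^sup>2)) / (1 - cnj (zs i) * z)
               * (\<Prod>k\<in>{1..<i}. (z - zs k) / (1 - cnj (zs k) * z))"

end

theory Submission
  imports Defs "HOL-Complex_Analysis.Complex_Analysis"
begin

text \<open>Write e_{i,m} = u_i R^m and k_a(z) = 1/(1 - cnj a z) for the Szeg\<ouml> kernel.
  On the unit circle every Blaschke factor is unimodular, so Parseval turns
  \<langle>e_{i,p}, e_{j,q}\<rangle> into \<langle>G, k_{z_j}\<rangle> = G(z_j) for an explicit G holomorphic beyond the
  closed disk, and G(z_j) = 0 unless (i,p) = (j,q): the e_{i,m} are orthonormal.  The telescoping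
  identity (1 - |a|^2) \<Sum>_i |u_i(a)|^2 = 1 - |R(a)|^2 says \<Sum>_{i,m} |e_{i,m}(a)|^2 = \<parallel>k_a\<parallel>^2,
  so by Bessel's equality the system is complete.  As u_i is holomorphic on a larger disk,
  T_{u_i} C_R g = u_i (g \<circ> R) = \<Sum>_m g_m e_{i,m}, an isometry whose adjoint maps f to
  \<Sum>_m \<langle>f, e_{i,m}\<rangle> z^m.  The first identity is then orthonormality, the second the expansion
  of f in the complete system.\<close>

section \<open>Square-summable sequences\<close>

definition square_summable :: "(nat \<Rightarrow> complex) \<Rightarrow> bool" where
  "square_summable a \<longleftrightarrow> summable (\<lambda>n. (norm (a n))\<^sup>2)"

definition l2_sqnorm :: "(nat \<Rightarrow> complex) \<Rightarrow> real" where
  "l2_sqnorm a = (\<Sum>n. (norm (a n))\<^sup>2)"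

definition l2_inner :: "(nat \<Rightarrow> complex) \<Rightarrow> (nat \<Rightarrow> complex) \<Rightarrow> complex" where
  "l2_inner a b = (\<Sum>n. a n * cnj (b n))"

lemma l2_sqnorm_nonneg: "square_summable a \<Longrightarrow> l2_sqnorm a \<ge> 0"
  unfolding l2_sqnorm_def square_summable_def by (intro suminf_nonneg) auto

lemma sum_le_l2_sqnorm:
  assumes "square_summable a" "finite S"
  shows "(\<Sum>k\<in>S. (norm (a k))\<^sup>2) \<le> l2_sqnorm a"
  using assms unfolding square_summable_def l2_sqnorm_def by (intro sum_le_suminf) auto

lemma summable_norm_mult_square_summable:
  assumes "square_summable a" "square_summable b"
  shows "summable (\<lambda>n. norm (a n) * norm (b n))"
proof (rule summable_comparison_test')
  show "summable (\<lambda>n. (norm (a n))\<^sup>2 + (norm (b n))\<^sup>2)"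
    using assms unfolding square_summable_def by (intro summable_add)
  fix n
  have "2 * norm (a n) * norm (b n) \<le> (norm (a n))\<^sup>2 + (norm (b n))\<^sup>2"
    by (rule sum_squares_bound)
  moreover have "0 \<le> norm (a n) * norm (b n)" by simp
  ultimately show "norm (norm (a n) * norm (b n)) \<le> (norm (a n))\<^sup>2 + (norm (b n))\<^sup>2"
    by (simp only: real_norm_def abs_mult abs_norm_cancel)
qed

lemma summable_l2_inner:
  assumes "square_summable a" "square_summable b"
  shows "summable (\<lambda>n. a n * cnj (b n))"
  by (rule summable_norm_cancel)
     (use summable_norm_mult_square_summable[OF assms] in \<open>simp add: norm_mult\<close>)

lemma l2_inner_sums:
  assumes "square_summable a" "square_summable b"
  shows "(\<lambda>n. a n * cnj (b n)) sums l2_inner a b"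
  unfolding l2_inner_def using summable_l2_inner[OF assms] by (rule summable_sums)

lemma square_summable_add:
  assumes "square_summable a" "square_summable b"
  shows "square_summable (\<lambda>n. a n + b n)"
  unfolding square_summable_def
proof (rule summable_comparison_test')
  show "summable (\<lambda>n. 2 * (norm (a n))\<^sup>2 + 2 * (norm (b n))\<^sup>2)"
    using assms unfolding square_summable_def by (intro summable_add summable_mult)
  fix n
  have "(norm (a n + b n))\<^sup>2 \<le> (norm (a n) + norm (b n))\<^sup>2"
    by (intro power_mono norm_triangle_ineq) auto
  also have "\<dots> \<le> 2 * (norm (a n))\<^sup>2 + 2 * (norm (b n))\<^sup>2"
    using sum_squares_bound[of "norm (a n)" "norm (b n)"] by (simp add: power2_eq_square algebra_simps)
  finally show "norm ((norm (a n + b n))\<^sup>2) \<le> 2 * (norm (a n))\<^sup>2 + 2 * (norm (b n))\<^sup>2" by simp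
qed

lemma square_summable_cmult: "square_summable a \<Longrightarrow> square_summable (\<lambda>n. c * a n)"
  unfolding square_summable_def by (simp add: norm_mult power_mult_distrib summable_mult)

lemma square_summable_diff:
  assumes "square_summable a" "square_summable b"
  shows "square_summable (\<lambda>n. a n - b n)"
  using square_summable_add[OF assms(1) square_summable_cmult[OF assms(2), of "-1"]] by simp

lemma square_summable_sum:
  "finite J \<Longrightarrow> (\<And>j. j \<in> J \<Longrightarrow> square_summable (v j)) \<Longrightarrow> square_summable (\<lambda>n. \<Sum>j\<in>J. v j n)"
proof (induction J rule: finite_induct)
  case empty
  then show ?case by (simp add: square_summable_def)
next
  case (insert x F)
  then show ?case by (simp add: square_summable_add)
qed

lemma square_summable_lincomb:
  "finite J \<Longrightarrow> (\<And>j. j \<in> J \<Longrightarrow> square_summable (v j)) \<Longrightarrow>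
    square_summable (\<lambda>n. \<Sum>j\<in>J. x j * v j n)"
  by (intro square_summable_sum square_summable_cmult)

lemma l2_inner_add_left:
  assumes "square_summable a" "square_summable b" "square_summable c"
  shows "l2_inner (\<lambda>n. a n + b n) c = l2_inner a c + l2_inner b c"
  unfolding l2_inner_def using summable_l2_inner[OF assms(1,3)] summable_l2_inner[OF assms(2,3)]
  by (simp add: distrib_right suminf_add)

lemma l2_inner_cmult_left:
  assumes "square_summable a" "square_summable c"
  shows "l2_inner (\<lambda>n. x * a n) c = x * l2_inner a c"
  unfolding l2_inner_def using summable_l2_inner[OF assms] by (simp add: suminf_mult mult.assoc)

lemma l2_inner_commute:
  assumes "square_summable a" "square_summable b"
  shows "l2_inner a b = cnj (l2_inner b a)"
proof -
  have "(\<lambda>n. cnj (b n * cnj (a n))) sums cnj (l2_inner b a)"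
    using l2_inner_sums[OF assms(2,1)] by (simp only: sums_cnj)
  hence "(\<lambda>n. a n * cnj (b n)) sums cnj (l2_inner b a)" by (simp add: mult.commute)
  thus ?thesis unfolding l2_inner_def by (rule sums_unique[symmetric])
qed

lemma l2_inner_diff_left:
  assumes "square_summable a" "square_summable b" "square_summable c"
  shows "l2_inner (\<lambda>n. a n - b n) c = l2_inner a c - l2_inner b c"
  using l2_inner_add_left[OF assms(1) square_summable_cmult[OF assms(2)] assms(3), of "-1"]
    l2_inner_cmult_left[OF assms(2,3), of "-1"]
  by simp

lemma l2_inner_diff_right:
  assumes "square_summable a" "square_summable b" "square_summable c"
  shows "l2_inner c (\<lambda>n. a n - b n) = l2_inner c a - l2_inner c b"
proof -
  have "l2_inner c (\<lambda>n. a n - b n) = cnj (l2_inner (\<lambda>n. a n - b n) c)"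
    using assms by (intro l2_inner_commute square_summable_diff)
  also have "\<dots> = cnj (l2_inner a c) - cnj (l2_inner b c)"
    using l2_inner_diff_left[OF assms] by simp
  also have "\<dots> = l2_inner c a - l2_inner c b"
    using l2_inner_commute[OF assms(3,1)] l2_inner_commute[OF assms(3,2)] by simp
  finally show ?thesis .
qed

lemma l2_inner_lincomb_left:
  "finite J \<Longrightarrow> (\<And>j. j \<in> J \<Longrightarrow> square_summable (v j)) \<Longrightarrow> square_summable c \<Longrightarrow>
   l2_inner (\<lambda>n. \<Sum>j\<in>J. x j * v j n) c = (\<Sum>j\<in>J. x j * l2_inner (v j) c)"
proof (induction J rule: finite_induct)
  case empty
  then show ?case by (simp add: l2_inner_def)
next
  case (insert y F)
  have "l2_inner (\<lambda>n. \<Sum>j\<in>insert y F. x j * v j n) c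
      = l2_inner (\<lambda>n. x y * v y n + (\<Sum>j\<in>F. x j * v j n)) c"
    using insert by simp
  also have "\<dots> = x y * l2_inner (v y) c + l2_inner (\<lambda>n. \<Sum>j\<in>F. x j * v j n) c"
    using insert
    by (simp add: l2_inner_add_left l2_inner_cmult_left square_summable_cmult square_summable_lincomb)
  finally show ?case using insert by simp
qed

lemma l2_inner_lincomb_right:
  assumes "finite J" "\<And>j. j \<in> J \<Longrightarrow> square_summable (v j)" "square_summable c"
  shows "l2_inner c (\<lambda>n. \<Sum>j\<in>J. x j * v j n) = (\<Sum>j\<in>J. cnj (x j) * l2_inner c (v j))"
proof -
  have "l2_inner c (\<lambda>n. \<Sum>j\<in>J. x j * v j n) = cnj (l2_inner (\<lambda>n. \<Sum>j\<in>J. x j * v j n) c)"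
    using assms by (intro l2_inner_commute square_summable_lincomb) auto
  also have "\<dots> = (\<Sum>j\<in>J. cnj (x j) * l2_inner c (v j))"
    using assms l2_inner_commute[OF assms(3) assms(2)] by (simp add: l2_inner_lincomb_left)
  finally show ?thesis .
qed

lemma l2_inner_self:
  assumes "square_summable a"
  shows "l2_inner a a = complex_of_real (l2_sqnorm a)"
proof -
  have "(\<lambda>n. a n * cnj (a n)) = (\<lambda>n. of_real ((norm (a n))\<^sup>2))"
    by (simp only: complex_norm_square)
  moreover have "(\<lambda>n. complex_of_real ((norm (a n))\<^sup>2)) sums complex_of_real (l2_sqnorm a)"
    using assms unfolding square_summable_def l2_sqnorm_def by (intro sums_of_real summable_sums)
  ultimately show ?thesis unfolding l2_inner_def by (simp add: sums_iff)
qed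

lemma l2_inner_Cauchy_Schwarz:
  assumes "square_summable a" "square_summable b"
  shows "(norm (l2_inner a b))\<^sup>2 \<le> l2_sqnorm a * l2_sqnorm b"
proof -
  have s: "summable (\<lambda>n. norm (a n) * norm (b n))"
    by (rule summable_norm_mult_square_summable[OF assms])
  have partial: "(\<Sum>n<N. norm (a n) * norm (b n))\<^sup>2 \<le> l2_sqnorm a * l2_sqnorm b" for N
  proof -
    have "(\<Sum>n<N. norm (a n) * norm (b n))\<^sup>2 \<le> (\<Sum>n<N. (norm (a n))\<^sup>2) * (\<Sum>n<N. (norm (b n))\<^sup>2)"
      by (rule Cauchy_Schwarz_ineq_sum)
    also have "\<dots> \<le> l2_sqnorm a * l2_sqnorm b"
      using assms by (intro mult_mono sum_le_l2_sqnorm l2_sqnorm_nonneg) (auto intro: sum_nonneg)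
    finally show ?thesis .
  qed
  have "norm (l2_inner a b) \<le> (\<Sum>n. norm (a n * cnj (b n)))"
    unfolding l2_inner_def using s by (intro summable_norm) (simp add: norm_mult)
  hence "(norm (l2_inner a b))\<^sup>2 \<le> (\<Sum>n. norm (a n * cnj (b n)))\<^sup>2"
    by (intro power_mono) auto
  also have "\<dots> = (\<Sum>n. norm (a n) * norm (b n))\<^sup>2" by (simp add: norm_mult)
  also have "\<dots> \<le> l2_sqnorm a * l2_sqnorm b"
    by (rule LIMSEQ_le_const2[OF tendsto_power[OF summable_LIMSEQ[OF s]]]) (use partial in auto)
  finally show ?thesis .
qed

lemma l2_inner_tendsto_left:
  assumes a: "square_summable a" and b: "square_summable b" and A: "\<And>N. square_summable (A N)"
    and conv: "(\<lambda>N. l2_sqnorm (\<lambda>k. A N k - a k)) \<longlonglongrightarrow> 0"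
  shows "(\<lambda>N. l2_inner (A N) b) \<longlonglongrightarrow> l2_inner a b"
proof -
  have bound: "norm (l2_inner (A N) b - l2_inner a b) \<le> sqrt (l2_sqnorm (\<lambda>k. A N k - a k) * l2_sqnorm b)" for N
    using l2_inner_Cauchy_Schwarz[OF square_summable_diff[OF A a] b] l2_inner_diff_left[OF A a b]
    by (simp add: real_le_rsqrt)
  have "(\<lambda>N. sqrt (l2_sqnorm (\<lambda>k. A N k - a k) * l2_sqnorm b)) \<longlonglongrightarrow> 0"
    using tendsto_real_sqrt[OF tendsto_mult_left_zero[OF conv]] by simp
  hence "(\<lambda>N. l2_inner (A N) b - l2_inner a b) \<longlonglongrightarrow> 0"
    by (rule Lim_null_comparison[rotated]) (use bound in \<open>simp add: always_eventually\<close>)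
  thus ?thesis by (rule LIM_zero_cancel)
qed

lemma l2_inner_tendsto_right:
  assumes "square_summable a" "square_summable b" "\<And>N. square_summable (B N)"
    and "(\<lambda>N. l2_sqnorm (\<lambda>k. B N k - b k)) \<longlonglongrightarrow> 0"
  shows "(\<lambda>N. l2_inner a (B N)) \<longlonglongrightarrow> l2_inner a b"
proof -
  have "(\<lambda>N. cnj (l2_inner (B N) a)) \<longlonglongrightarrow> cnj (l2_inner b a)"
    by (intro tendsto_cnj l2_inner_tendsto_left assms)
  thus ?thesis using assms by (simp add: l2_inner_commute[of a])
qed

lemma Cauchy_if_dist_bounded:
  fixes x :: "nat \<Rightarrow> 'a::metric_space"
  assumes dist: "\<And>N M. N \<le> M \<Longrightarrow> dist (x M) (x N) \<le> \<delta> N" and "\<delta> \<longlonglongrightarrow> 0"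
  shows "Cauchy x"
  unfolding Cauchy_altdef2
proof (intro allI impI)
  fix e :: real assume "e > 0"
  have "eventually (\<lambda>N. \<delta> N < e) sequentially"
    using \<open>\<delta> \<longlonglongrightarrow> 0\<close> \<open>e > 0\<close> by (rule order_tendstoD)
  then obtain N where "\<delta> N < e" by (auto simp: eventually_sequentially)
  thus "\<exists>N. \<forall>n\<ge>N. dist (x n) (x N) < e" using dist by (meson order.strict_trans1)
qed

lemma square_summable_complete:
  fixes x :: "nat \<Rightarrow> nat \<Rightarrow> complex"
  assumes x: "\<And>M. square_summable (x M)" and \<epsilon>: "\<epsilon> \<longlonglongrightarrow> 0"
    and x_Cauchy: "\<And>N M. N \<le> M \<Longrightarrow> l2_sqnorm (\<lambda>k. x M k - x N k) \<le> \<epsilon> N"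
  obtains d where "square_summable d" "\<And>N. l2_sqnorm (\<lambda>k. d k - x N k) \<le> \<epsilon> N"
proof -
  have partial: "(\<Sum>k\<in>S. (norm (x M k - x N k))\<^sup>2) \<le> \<epsilon> N" if "N \<le> M" "finite S" for N M S
    using sum_le_l2_sqnorm[OF square_summable_diff[OF x[of M] x[of N]] that(2)] x_Cauchy[OF that(1)]
    by simp
  have "Cauchy (\<lambda>M. x M k)" for k
  proof (rule Cauchy_if_dist_bounded)
    show "dist (x M k) (x N k) \<le> sqrt (\<epsilon> N)" if "N \<le> M" for N M
      using partial[OF that, of "{k}"] by (simp add: dist_norm real_le_rsqrt)
    show "(\<lambda>N. sqrt (\<epsilon> N)) \<longlonglongrightarrow> 0" using tendsto_real_sqrt[OF \<epsilon>] by simp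
  qed
  hence "convergent (\<lambda>M. x M k)" for k by (rule Cauchy_convergent)
  then obtain d where d: "\<And>k. (\<lambda>M. x M k) \<longlonglongrightarrow> d k"
    unfolding convergent_def by metis
  have bounded: "(\<Sum>k<K. (norm (d k - x N k))\<^sup>2) \<le> \<epsilon> N" for N K
  proof (rule tendsto_upperbound)
    show "(\<lambda>M. \<Sum>k<K. (norm (x M k - x N k))\<^sup>2) \<longlonglongrightarrow> (\<Sum>k<K. (norm (d k - x N k))\<^sup>2)"
      by (intro tendsto_intros d)
    show "eventually (\<lambda>M. (\<Sum>k<K. (norm (x M k - x N k))\<^sup>2) \<le> \<epsilon> N) sequentially"
      using partial by (intro eventually_sequentiallyI[of N]) auto
  qed simp
  have sq: "square_summable (\<lambda>k. d k - x N k)" for N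
    unfolding square_summable_def
    by (rule summableI_nonneg_bounded[where x="\<epsilon> N"]) (use bounded in auto)
  have "square_summable (\<lambda>k. (d k - x 0 k) + x 0 k)"
    by (rule square_summable_add[OF sq x])
  moreover have "l2_sqnorm (\<lambda>k. d k - x N k) \<le> \<epsilon> N" for N
    using sq[of N] unfolding l2_sqnorm_def square_summable_def
    by (rule suminf_le_const) (use bounded in auto)
  ultimately show ?thesis using that by simp
qed

definition orthonormal :: "'j set \<Rightarrow> ('j \<Rightarrow> nat \<Rightarrow> complex) \<Rightarrow> bool" where
  "orthonormal J v \<longleftrightarrow> (\<forall>j\<in>J. square_summable (v j)) \<and>
                       (\<forall>j\<in>J. \<forall>l\<in>J. l2_inner (v j) (v l) = (if j = l then 1 else 0))"

lemma orthonormal_subset: "orthonormal J v \<Longrightarrow> K \<subseteq> J \<Longrightarrow> orthonormal K v"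
  unfolding orthonormal_def by blast

lemma l2_sqnorm_orthonormal_lincomb:
  assumes fin: "finite J" and on: "orthonormal J v"
  shows "l2_sqnorm (\<lambda>k. \<Sum>j\<in>J. x j * v j k) = (\<Sum>j\<in>J. (norm (x j))\<^sup>2)"
proof -
  define s where "s = (\<lambda>k. \<Sum>j\<in>J. x j * v j k)"
  have v: "\<And>j. j \<in> J \<Longrightarrow> square_summable (v j)" using on unfolding orthonormal_def by auto
  have s: "square_summable s" unfolding s_def using fin v by (rule square_summable_lincomb)
  have "complex_of_real (l2_sqnorm s) = l2_inner s s"
    by (rule l2_inner_self[OF s, symmetric])
  also have "\<dots> = (\<Sum>j\<in>J. x j * l2_inner (v j) s)"
    using l2_inner_lincomb_left[OF fin v s, where x=x] unfolding s_def .
  also have "\<dots> = (\<Sum>j\<in>J. x j * (\<Sum>l\<in>J. cnj (x l) * l2_inner (v j) (v l)))"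
    unfolding s_def using fin v by (simp add: l2_inner_lincomb_right)
  also have "\<dots> = (\<Sum>j\<in>J. x j * cnj (x j))"
  proof (intro sum.cong refl arg_cong2[where f="(*)"])
    fix j assume j: "j \<in> J"
    have "(\<Sum>l\<in>J. cnj (x l) * l2_inner (v j) (v l)) = (\<Sum>l\<in>J. if l = j then cnj (x l) else 0)"
      using on j unfolding orthonormal_def by (intro sum.cong) auto
    also have "\<dots> = cnj (x j)" using fin j by simp
    finally show "(\<Sum>l\<in>J. cnj (x l) * l2_inner (v j) (v l)) = cnj (x j)" .
  qed
  also have "\<dots> = complex_of_real (\<Sum>j\<in>J. (norm (x j))\<^sup>2)"
    by (simp only: of_real_sum complex_norm_square)
  finally show ?thesis unfolding s_def by (simp only: of_real_eq_iff)
qed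

lemma l2_sqnorm_Bessel:
  assumes fin: "finite J" and on: "orthonormal J v" and y: "square_summable y"
  shows "l2_sqnorm (\<lambda>k. y k - (\<Sum>j\<in>J. l2_inner y (v j) * v j k))
       = l2_sqnorm y - (\<Sum>j\<in>J. (norm (l2_inner y (v j)))\<^sup>2)"
proof -
  define c where "c j = l2_inner y (v j)" for j
  define s where "s = (\<lambda>k. \<Sum>j\<in>J. c j * v j k)"
  define S2 where "S2 = (\<Sum>j\<in>J. (norm (c j))\<^sup>2)"
  have v: "\<And>j. j \<in> J \<Longrightarrow> square_summable (v j)" using on unfolding orthonormal_def by auto
  have s: "square_summable s" unfolding s_def using fin v by (rule square_summable_lincomb)
  have "l2_inner y s = (\<Sum>j\<in>J. cnj (c j) * l2_inner y (v j))"
    unfolding s_def by (rule l2_inner_lincomb_right[OF fin v y])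
  also have "\<dots> = (\<Sum>j\<in>J. of_real ((norm (c j))\<^sup>2))"
    unfolding c_def by (intro sum.cong refl) (simp only: complex_norm_square mult.commute)
  finally have ys: "l2_inner y s = of_real S2" unfolding S2_def by simp
  have sy: "l2_inner s y = of_real S2" using l2_inner_commute[OF s y] ys by simp
  have ss: "l2_inner s s = of_real S2"
    using l2_inner_self[OF s] l2_sqnorm_orthonormal_lincomb[OF fin on, of c]
    unfolding s_def S2_def by simp
  have "complex_of_real (l2_sqnorm (\<lambda>k. y k - s k)) = l2_inner (\<lambda>k. y k - s k) (\<lambda>k. y k - s k)"
    by (rule l2_inner_self[OF square_summable_diff[OF y s], symmetric])
  also have "\<dots> = (l2_inner y y - l2_inner y s) - (l2_inner s y - l2_inner s s)"
    using y s by (simp add: l2_inner_diff_left l2_inner_diff_right square_summable_diff)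
  also have "\<dots> = of_real (l2_sqnorm y - S2)" using ys sy ss l2_inner_self[OF y] by simp
  finally show ?thesis unfolding s_def S2_def c_def by (simp only: of_real_eq_iff)
qed

lemma square_summable_orthonormal_coeffs:
  assumes on: "orthonormal UNIV v" and y: "square_summable y"
  shows "square_summable (\<lambda>m. l2_inner y (v m))"
proof -
  have partial: "(\<Sum>m<M. (norm (l2_inner y (v m)))\<^sup>2) \<le> l2_sqnorm y" for M
  proof -
    have onM: "orthonormal {..<M} v" using orthonormal_subset[OF on] by blast
    have "square_summable (\<lambda>k. \<Sum>m<M. l2_inner y (v m) * v m k)"
      using on unfolding orthonormal_def by (intro square_summable_lincomb) auto
    hence "0 \<le> l2_sqnorm (\<lambda>k. y k - (\<Sum>m<M. l2_inner y (v m) * v m k))"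
      by (intro l2_sqnorm_nonneg square_summable_diff[OF y])
    also have "\<dots> = l2_sqnorm y - (\<Sum>m<M. (norm (l2_inner y (v m)))\<^sup>2)"
      by (rule l2_sqnorm_Bessel[OF finite_lessThan onM y])
    finally show ?thesis by simp
  qed
  show ?thesis unfolding square_summable_def
    by (rule summableI_nonneg_bounded[where x="l2_sqnorm y"]) (use partial in auto)
qed

lemma l2_inner_delta_right: "l2_inner a (\<lambda>k. if k = m then 1 else 0) = a m"
proof -
  have "(\<lambda>k. a k * cnj (if k = m then 1 else 0)) = (\<lambda>k. if k = m then a m else 0)" by auto
  thus ?thesis unfolding l2_inner_def using sums_single[of m "\<lambda>_. a m"] by (simp add: sums_iff)
qed

section \<open>Taylor coefficients and the Hardy space\<close>

lemma taylor_coeff_sums: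
  assumes "F holomorphic_on ball 0 r" "z \<in> ball 0 r"
  shows "(\<lambda>n. taylor_coeff F n * z ^ n) sums F z"
  using holomorphic_power_series[OF assms] by (simp add: taylor_coeff_def)

lemma taylor_coeff_unique:
  assumes r: "r > 0" and S: "\<And>z. z \<in> ball 0 r \<Longrightarrow> (\<lambda>n. d n * z ^ n) sums F z"
  shows "taylor_coeff F n = d n"
proof -
  have "summable (\<lambda>n. d n * (of_real (r/2)) ^ n)"
    using S[of "of_real (r/2)"] r by (auto simp: sums_iff)
  hence "ereal (r/2) \<le> conv_radius d"
    using conv_radius_geI[of d "of_real (r/2) :: complex"] r by simp
  hence "fps_conv_radius (Abs_fps d) > 0"
    unfolding fps_conv_radius_def using r by (simp add: less_le_trans[of 0 "ereal (r/2)"])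
  moreover have "eventually (\<lambda>z. z \<in> ball 0 r) (nhds (0::complex))"
    using r by (intro eventually_nhds_in_open) auto
  hence "eventually (\<lambda>z. eval_fps (Abs_fps d) z = F z) (nhds 0)"
    by eventually_elim (use S in \<open>auto simp: eval_fps_def sums_iff\<close>)
  ultimately have "F has_fps_expansion Abs_fps d" unfolding has_fps_expansion_def by auto
  from fps_nth_fps_expansion[OF this, of n] show ?thesis
    by (simp add: taylor_coeff_def)
qed

lemma taylor_coeff_cong:
  assumes "\<And>z. z \<in> ball 0 r \<Longrightarrow> F z = G z" "r > 0"
  shows "taylor_coeff F n = taylor_coeff G n"
proof -
  have "eventually (\<lambda>z. z \<in> ball 0 r) (nhds (0::complex))"
    using assms(2) by (intro eventually_nhds_in_open) auto
  hence "eventually (\<lambda>z. F z = G z) (nhds 0)" by eventually_elim (use assms in auto)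
  thus ?thesis unfolding taylor_coeff_def by (simp add: higher_deriv_cong_ev)
qed

lemma taylor_coeff_lincomb:
  assumes "finite S" "\<And>s. s \<in> S \<Longrightarrow> F s holomorphic_on ball 0 r" "r > 0"
  shows "taylor_coeff (\<lambda>z. \<Sum>s\<in>S. c s * F s z) k = (\<Sum>s\<in>S. c s * taylor_coeff (F s) k)"
proof (rule taylor_coeff_unique[OF assms(3)])
  fix z :: complex assume z: "z \<in> ball 0 r"
  have "(\<lambda>k. \<Sum>s\<in>S. c s * (taylor_coeff (F s) k * z ^ k)) sums (\<Sum>s\<in>S. c s * F s z)"
    by (intro sums_sum sums_mult taylor_coeff_sums[OF assms(2) z])
  thus "(\<lambda>k. (\<Sum>s\<in>S. c s * taylor_coeff (F s) k) * z ^ k) sums (\<Sum>s\<in>S. c s * F s z)"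
    by (simp add: sum_distrib_right mult.assoc)
qed

lemma summable_norm_taylor_series:
  assumes hol: "F holomorphic_on ball 0 r" and z: "norm z < r"
  shows "summable (\<lambda>k. norm (taylor_coeff F k * z ^ k))"
proof -
  define w where "w = (norm z + r) / 2"
  have w: "norm z < w" "w < r" "0 \<le> w"
    using z norm_ge_zero[of z] w_def by (auto simp del: norm_ge_zero)
  have "(\<lambda>k. taylor_coeff F k * (of_real w) ^ k) sums F (of_real w)"
    by (rule taylor_coeff_sums[OF hol]) (use w in simp)
  hence "summable (\<lambda>k. taylor_coeff F k * (of_real w) ^ k)" by (simp add: sums_iff)
  thus ?thesis by (rule powser_insidea) (use w norm_ge_zero[of z] in auto)
qed

lemma mem_H2_iff: "F \<in> H2 \<longleftrightarrow> F holomorphic_on ball 0 1 \<and> square_summable (taylor_coeff F)"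
  unfolding H2_def square_summable_def by auto

lemma h2_inner_eq_l2_inner: "h2_inner F G = l2_inner (taylor_coeff F) (taylor_coeff G)"
  unfolding h2_inner_def l2_inner_def ..

lemma H2_if_holomorphic_on_larger_ball:
  assumes hol: "F holomorphic_on ball 0 \<rho>" and "1 < \<rho>"
  shows "F \<in> H2"
proof -
  have sm: "summable (\<lambda>n. norm (taylor_coeff F n))"
    using summable_norm_taylor_series[OF hol, of 1] assms(2) by simp
  hence "(\<lambda>n. norm (taylor_coeff F n)) \<longlonglongrightarrow> 0" by (rule summable_LIMSEQ_zero)
  hence "eventually (\<lambda>n. norm (taylor_coeff F n) < 1) sequentially"
    by (rule order_tendstoD) simp
  hence "eventually (\<lambda>n. norm ((norm (taylor_coeff F n))\<^sup>2) \<le> norm (taylor_coeff F n)) sequentially"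
    by eventually_elim (simp add: power2_eq_square mult_left_le)
  hence "square_summable (taylor_coeff F)"
    unfolding square_summable_def using sm by (rule summable_comparison_test_ev)
  moreover have "F holomorphic_on ball 0 1"
    using hol by (rule holomorphic_on_subset) (use assms(2) in auto)
  ultimately show ?thesis unfolding mem_H2_iff by auto
qed

definition szego_kernel :: "complex \<Rightarrow> complex \<Rightarrow> complex" where
  "szego_kernel a z = 1 / (1 - cnj a * z)"

lemma holomorphic_on_szego_kernel:
  assumes "norm a * \<rho> \<le> 1"
  shows "szego_kernel a holomorphic_on ball 0 \<rho>"
proof -
  have "norm (cnj a * z) < 1" if "z \<in> ball 0 \<rho>" for z
  proof (cases "a = 0")
    case False
    hence "norm a * norm z < norm a * \<rho>" using that by simp
    thus ?thesis using assms by (simp add: norm_mult)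
  qed simp
  thus ?thesis unfolding szego_kernel_def[abs_def] by (intro holomorphic_intros) force
qed

lemma taylor_coeff_szego_kernel:
  assumes "norm a < 1"
  shows "taylor_coeff (szego_kernel a) n = cnj a ^ n"
proof (rule taylor_coeff_unique[of 1])
  fix z :: complex assume "z \<in> ball 0 1"
  hence "norm a * norm z < 1 * 1" using assms by (intro mult_strict_mono') auto
  hence "norm (cnj a * z) < 1" by (simp add: norm_mult)
  hence "(\<lambda>n. (cnj a * z) ^ n) sums (1 / (1 - cnj a * z))" by (rule geometric_sums)
  thus "(\<lambda>n. cnj a ^ n * z ^ n) sums szego_kernel a z"
    unfolding szego_kernel_def by (simp add: power_mult_distrib)
qed simp

lemma szego_kernel_sqnorm:
  assumes "norm a < 1"
  shows "square_summable (taylor_coeff (szego_kernel a))"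
    and "l2_sqnorm (taylor_coeff (szego_kernel a)) = 1 / (1 - (norm a)\<^sup>2)"
proof -
  have g: "(\<lambda>n. ((norm a)\<^sup>2) ^ n) sums (1 / (1 - (norm a)\<^sup>2))"
    using assms by (intro geometric_sums) (simp add: abs_square_less_1)
  have e: "(\<lambda>n. (norm (taylor_coeff (szego_kernel a) n))\<^sup>2) = (\<lambda>n. ((norm a)\<^sup>2) ^ n)"
    by (simp add: taylor_coeff_szego_kernel[OF assms] norm_power power2_eq_square power_mult_distrib)
  show "square_summable (taylor_coeff (szego_kernel a))"
    unfolding square_summable_def e using g by (simp add: sums_iff)
  show "l2_sqnorm (taylor_coeff (szego_kernel a)) = 1 / (1 - (norm a)\<^sup>2)"
    unfolding l2_sqnorm_def e using g by (simp add: sums_iff)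
qed

lemma szego_kernel_reproducing:
  assumes "F holomorphic_on ball 0 1" "norm a < 1"
  shows "l2_inner (taylor_coeff F) (taylor_coeff (szego_kernel a)) = F a"
proof -
  have "(\<lambda>n. taylor_coeff F n * a ^ n) sums F a" using assms by (intro taylor_coeff_sums) auto
  thus ?thesis unfolding l2_inner_def taylor_coeff_szego_kernel[OF assms(2)] by (simp add: sums_iff)
qed

lemma szego_kernel_diagonal: "szego_kernel a a = 1 / (1 - (norm a)\<^sup>2)"
  unfolding szego_kernel_def by (simp add: mult.commute[of "cnj a"] flip: complex_norm_square)

lemma taylor_coeff_monomial: "taylor_coeff (\<lambda>z. z ^ k) n = (if n = k then 1 else 0)"
proof (rule taylor_coeff_unique[of 1])
  fix z :: complex
  have "(\<lambda>n. (if n = k then 1 else 0) * z ^ n) = (\<lambda>n. if n = k then z ^ k else 0)" by auto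
  thus "(\<lambda>n. (if n = k then 1 else 0) * z ^ n) sums z ^ k"
    using sums_single[of k "\<lambda>_. z ^ k"] by simp
qed simp

lemma monomial_in_H2: "(\<lambda>z. z ^ k) \<in> H2"
proof -
  have "summable (\<lambda>n. (norm (taylor_coeff (\<lambda>z. z ^ k) n))\<^sup>2)"
    unfolding taylor_coeff_monomial by (rule summable_finite[of "{k}"]) auto
  thus ?thesis unfolding H2_def by (auto intro: holomorphic_intros)
qed

lemma h2_inner_monomial: "h2_inner (\<lambda>z. z ^ k) h = cnj (taylor_coeff h k)"
proof -
  have "h2_inner (\<lambda>z. z ^ k) h = (\<Sum>n\<in>{k}. taylor_coeff (\<lambda>z. z ^ k) n * cnj (taylor_coeff h n))"
    unfolding h2_inner_def by (rule suminf_finite) (auto simp: taylor_coeff_monomial)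
  thus ?thesis by (simp add: taylor_coeff_monomial)
qed

text \<open>Testing against monomials determines all Taylor coefficients of an adjoint.\<close>

lemma h2_adjoint_eqI:
  assumes h: "h \<in> H2" and h0: "\<forall>z. z \<notin> ball 0 1 \<longrightarrow> h z = 0"
    and adj: "\<forall>f\<in>H2. h2_inner (A f) g = h2_inner f h"
  shows "h2_adjoint A g = h"
  unfolding h2_adjoint_def
proof (rule the_equality)
  show "h \<in> H2 \<and> (\<forall>z. z \<notin> ball 0 1 \<longrightarrow> h z = 0) \<and> (\<forall>f\<in>H2. h2_inner (A f) g = h2_inner f h)"
    using assms by blast
next
  fix h' assume h': "h' \<in> H2 \<and> (\<forall>z. z \<notin> ball 0 1 \<longrightarrow> h' z = 0) \<and>
                      (\<forall>f\<in>H2. h2_inner (A f) g = h2_inner f h')"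
  have "h2_inner (\<lambda>z. z ^ k) h' = h2_inner (\<lambda>z. z ^ k) h" for k
    using h' adj monomial_in_H2[of k] by auto
  hence "taylor_coeff h' k = taylor_coeff h k" for k unfolding h2_inner_monomial by simp
  moreover have "h holomorphic_on ball 0 1" "h' holomorphic_on ball 0 1"
    using h h' unfolding mem_H2_iff by auto
  ultimately have inside: "h' z = h z" if "z \<in> ball 0 1" for z
    using taylor_coeff_sums[of h' 1 z] taylor_coeff_sums[of h 1 z] that
    by (simp add: sums_unique2)
  show "h' = h"
  proof
    show "h' z = h z" for z using inside h0 h' by (cases "z \<in> ball 0 1") auto
  qed
qed

lemma square_summable_power_series_sums:
  assumes c: "square_summable c" and w: "norm w < 1"
  shows "(\<lambda>m. c m * w ^ m) sums l2_inner c (taylor_coeff (szego_kernel w))"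
  using l2_inner_sums[OF c szego_kernel_sqnorm(1)[OF w]] by (simp add: taylor_coeff_szego_kernel[OF w])

lemma power_series_in_H2:
  assumes c: "square_summable c"
  defines "P \<equiv> \<lambda>w. if w \<in> ball 0 1 then \<Sum>m. c m * w ^ m else 0"
  shows "P \<in> H2" "taylor_coeff P = c"
proof -
  have sums: "(\<lambda>m. c m * w ^ m) sums P w" if "w \<in> ball 0 1" for w
    using square_summable_power_series_sums[OF c, of w] that unfolding P_def
    by (simp add: sums_iff)
  show tc: "taylor_coeff P = c" by (rule ext, rule taylor_coeff_unique[of 1]) (use sums in auto)
  have "P holomorphic_on ball 0 1"
    by (rule power_series_holomorphic[where a=c]) (use sums in simp)
  thus "P \<in> H2" unfolding mem_H2_iff tc using c by simp
qed

text \<open>Evaluation at z is the continuous functional \<langle>-, k_z\<rangle>.\<close>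

lemma taylor_coeff_eq_l2_limit:
  assumes d: "square_summable d"
    and F: "\<And>N. F N holomorphic_on ball 0 1" "\<And>N. square_summable (taylor_coeff (F N))"
    and l2_conv: "(\<lambda>N. l2_sqnorm (\<lambda>k. taylor_coeff (F N) k - d k)) \<longlonglongrightarrow> 0"
    and pointwise: "\<And>z. z \<in> ball 0 1 \<Longrightarrow> (\<lambda>N. F N z) \<longlonglongrightarrow> G z"
  shows "taylor_coeff G = d"
proof (rule ext, rule taylor_coeff_unique[of 1])
  fix z :: complex assume z: "z \<in> ball 0 1"
  hence nz: "norm z < 1" by simp
  define y where "y = taylor_coeff (szego_kernel z)"
  have "(\<lambda>N. l2_inner (taylor_coeff (F N)) y) \<longlonglongrightarrow> l2_inner d y"
    unfolding y_def by (rule l2_inner_tendsto_left[OF d szego_kernel_sqnorm(1)[OF nz] F(2) l2_conv])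
  moreover have "l2_inner (taylor_coeff (F N)) y = F N z" for N
    unfolding y_def by (rule szego_kernel_reproducing[OF F(1) nz])
  ultimately have "G z = l2_inner d y" using pointwise[OF z] by (simp add: LIMSEQ_unique)
  thus "(\<lambda>k. d k * z ^ k) sums G z"
    using square_summable_power_series_sums[OF d, of z] nz by (simp add: y_def)
qed simp

section \<open>Integrals over the unit circle\<close>

lemma circle_integral_taylor_coeff:
  assumes hol: "G holomorphic_on ball 0 \<rho>" and "1 < \<rho>"
  shows "((\<lambda>t. G (cis t) * cis (- of_nat j * t)) has_integral 2 * pi * taylor_coeff G j) {0..2*pi}"
proof -
  have sub: "cball 0 1 \<subseteq> ball (0::complex) \<rho>" using assms(2) by auto
  have "continuous_on (cball 0 1) G"
    using continuous_on_subset[OF holomorphic_on_imp_continuous_on[OF hol] sub] .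
  moreover have "G holomorphic_on ball 0 1"
    using holomorphic_on_subset[OF hol] sub ball_subset_cball by blast
  ultimately have "((\<lambda>u. G u / (u - 0) ^ Suc j) has_contour_integral (2 * pi * \<i> / fact j * (deriv ^^ j) G 0))
           (circlepath 0 1)"
    by (rule Cauchy_has_contour_integral_higher_derivative_circlepath) simp
  hence "((\<lambda>t. G (0 + 1 * cis t) / (0 + 1 * cis t - 0) ^ Suc j * 1 * \<i> * cis t) has_integral
        (2 * pi * \<i> / fact j * (deriv ^^ j) G 0)) {0..2*pi}"
    unfolding circlepath_def by (subst (asm) has_contour_integral_part_circlepath_iff) auto
  moreover have "G (0 + 1 * cis t) / (0 + 1 * cis t - 0) ^ Suc j * 1 * \<i> * cis t
       = \<i> * (G (cis t) * cis (- of_nat j * t))" for t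
    by (simp add: field_simps Complex.DeMoivre cis_divide[symmetric] flip: cis_inverse)
  ultimately have "((\<lambda>t. \<i> * (G (cis t) * cis (- of_nat j * t))) has_integral
        (2 * pi * \<i> / fact j * (deriv ^^ j) G 0)) {0..2*pi}" by simp
  from has_integral_mult_right[OF this, of "-\<i>"] show ?thesis
    unfolding taylor_coeff_def by (simp add: field_simps)
qed

lemma fourier_integral_holomorphic:
  fixes F :: "complex \<Rightarrow> complex" and k :: int
  assumes hol: "F holomorphic_on ball 0 \<rho>" and "1 < \<rho>"
  shows "((\<lambda>t. F (cis t) * cis (- of_int k * t)) has_integral
           (if k \<ge> 0 then 2 * pi * taylor_coeff F (nat k) else 0)) {0..2*pi}"
proof (cases "k \<ge> 0")
  case True
  thus ?thesis using circle_integral_taylor_coeff[OF hol assms(2), of "nat k"] by simp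
next
  case False
  define G where "G u = F u * u ^ nat (- k)" for u
  have "G holomorphic_on ball 0 \<rho>" unfolding G_def[abs_def] using hol by (intro holomorphic_intros)
  from circle_integral_taylor_coeff[OF this assms(2), of 0]
  have "((\<lambda>t. G (cis t)) has_integral 2 * pi * G 0) {0..2*pi}" by (simp add: taylor_coeff_def)
  moreover have "G 0 = 0" using False by (simp add: G_def)
  moreover have "G (cis t) = F (cis t) * cis (- of_int k * t)" for t
    unfolding G_def Complex.DeMoivre using False by simp
  ultimately show ?thesis using False by simp
qed

lemma bounded_on_unit_circle:
  assumes "F holomorphic_on ball 0 \<rho>" "1 < \<rho>"
  obtains K where "\<And>t. norm (F (cis t)) \<le> K"
proof -
  have "cball 0 1 \<subseteq> ball (0::complex) \<rho>" using assms(2) by auto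
  hence "continuous_on (cball 0 1) F"
    using assms(1) continuous_on_subset holomorphic_on_imp_continuous_on by blast
  hence "bounded (F ` cball 0 1)" by (intro compact_imp_bounded compact_continuous_image) auto
  then obtain K where K: "\<And>x. x \<in> F ` cball 0 1 \<Longrightarrow> norm x \<le> K" unfolding bounded_iff by auto
  have "norm (F (cis t)) \<le> K" for t using K[of "F (cis t)"] by auto
  thus ?thesis by (rule that)
qed

lemma has_integral_suminf_Weierstrass:
  fixes f :: "nat \<Rightarrow> real \<Rightarrow> 'a::euclidean_space"
  assumes "I sums J"
    and int: "\<And>n. (f n has_integral I n) {a..b}" and cont: "\<And>n. continuous_on {a..b} (f n)"
    and bound: "\<And>n t. t \<in> {a..b} \<Longrightarrow> norm (f n t) \<le> M n" and "summable M"
  shows "((\<lambda>t. \<Sum>n. f n t) has_integral J) {a..b}"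
proof -
  have uniform: "uniform_limit {a..b} (\<lambda>N t. \<Sum>n<N. f n t) (\<lambda>t. \<Sum>n. f n t) sequentially"
    using bound \<open>summable M\<close> by (rule Weierstrass_m_test)
  have "continuous_on {a..b} (\<lambda>t. \<Sum>n<N. f n t)" for N
    using cont by (intro continuous_on_sum) auto
  then obtain I' J' where I': "\<And>N. ((\<lambda>t. \<Sum>n<N. f n t) has_integral I' N) {a..b}"
    and J': "((\<lambda>t. \<Sum>n. f n t) has_integral J') {a..b}" and "I' \<longlonglongrightarrow> J'"
    using uniform_limit_integral[OF uniform] by auto
  moreover have "I' N = (\<Sum>n<N. I n)" for N
    using I'[of N] by (rule has_integral_unique) (intro has_integral_sum int finite_lessThan)
  hence "I' = (\<lambda>N. \<Sum>n<N. I n)" ..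
  ultimately have "J' = J" using \<open>I sums J\<close> unfolding sums_def by (metis LIMSEQ_unique)
  thus ?thesis using J' by simp
qed

text \<open>Integrate F cnj(G) = \<Sum>_n F cnj(g_n) e^{-int} termwise: \<Sum>_n |g_n| < \<infinity> makes the series converge
  uniformly on the circle.\<close>

lemma parseval_circle:
  assumes holF: "F holomorphic_on ball 0 \<rho>" and holG: "G holomorphic_on ball 0 \<rho>" and "1 < \<rho>"
  shows "((\<lambda>t. F (cis t) * cnj (G (cis t))) has_integral
          2 * pi * l2_inner (taylor_coeff F) (taylor_coeff G)) {0..2*pi}"
proof -
  define f where "f = taylor_coeff F"
  define g where "g = taylor_coeff G"
  define h where "h = (\<lambda>n t. F (cis t) * cnj (g n) * cis (- of_int (int n) * t))"
  obtain K where K: "\<And>t. norm (F (cis t)) \<le> K" using bounded_on_unit_circle[OF holF assms(3)] by blast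
  have "(\<lambda>n. 2 * pi * (f n * cnj (g n))) sums (2 * pi * l2_inner f g)"
    using holF holG assms(3) unfolding f_def g_def
    by (intro sums_mult l2_inner_sums) (auto simp: mem_H2_iff dest: H2_if_holomorphic_on_larger_ball)
  hence "((\<lambda>t. \<Sum>n. h n t) has_integral 2 * pi * l2_inner f g) {0..2*pi}"
  proof (rule has_integral_suminf_Weierstrass)
    show "(h n has_integral (2 * pi * (f n * cnj (g n)))) {0..2*pi}" for n
      using has_integral_mult_right[OF fourier_integral_holomorphic[OF holF assms(3), of "int n"],
          of "cnj (g n)"]
      unfolding h_def f_def by (simp add: mult_ac)
    have "continuous_on UNIV (\<lambda>t. F (cis t))"
      using holF assms(3)
      by (intro continuous_on_compose2[of "ball 0 \<rho>" F UNIV cis] holomorphic_on_imp_continuous_on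
          continuous_on_cis continuous_on_id) auto
    thus "continuous_on {0..2*pi} (h n)" for n
      unfolding h_def by (intro continuous_intros) (auto intro: continuous_on_subset)
    show "norm (h n t) \<le> K * norm (g n)" for n t
      unfolding h_def using K[of t] by (simp add: norm_mult mult_right_mono)
    show "summable (\<lambda>n. K * norm (g n))"
      using summable_norm_taylor_series[OF holG, of 1] assms(3) unfolding g_def
      by (intro summable_mult) simp
  qed
  moreover have "(\<Sum>n. h n t) = F (cis t) * cnj (G (cis t))" for t
  proof -
    have "(\<lambda>n. g n * cis t ^ n) sums G (cis t)"
      unfolding g_def using assms(3) by (intro taylor_coeff_sums[OF holG]) auto
    hence "(\<lambda>n. F (cis t) * cnj (g n * cis t ^ n)) sums (F (cis t) * cnj (G (cis t)))"
      by (intro sums_mult) (simp only: sums_cnj)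
    thus ?thesis unfolding h_def by (simp add: sums_iff Complex.DeMoivre cis_cnj mult.assoc)
  qed
  ultimately show ?thesis unfolding f_def g_def by simp
qed

text \<open>Parseval turns \<langle>F, H\<rangle> into \<langle>G, k_a\<rangle>, which reproduces G a.\<close>

lemma l2_inner_eq_eval_if_circle_identity:
  assumes F: "F holomorphic_on ball 0 \<rho>" and H: "H holomorphic_on ball 0 \<rho>"
    and G: "G holomorphic_on ball 0 \<rho>" and "1 < \<rho>" and a: "norm a * \<rho> \<le> 1"
    and circle: "\<And>w. norm w = 1 \<Longrightarrow> F w * cnj (H w) = G w * cnj (szego_kernel a w)"
  shows "l2_inner (taylor_coeff F) (taylor_coeff H) = G a"
proof -
  have "norm a < 1"
  proof (rule ccontr)
    assume "\<not> norm a < 1"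
    hence "1 * \<rho> \<le> norm a * \<rho>" by (intro mult_right_mono) (use assms(4) in auto)
    thus False using a assms(4) by linarith
  qed
  have "F (cis t) * cnj (H (cis t)) = G (cis t) * cnj (szego_kernel a (cis t))" for t
    by (rule circle) simp
  hence "((\<lambda>t. G (cis t) * cnj (szego_kernel a (cis t))) has_integral
          2 * pi * l2_inner (taylor_coeff F) (taylor_coeff H)) {0..2*pi}"
    using parseval_circle[OF F H assms(4)] by simp
  hence "2 * pi * l2_inner (taylor_coeff F) (taylor_coeff H)
       = 2 * pi * l2_inner (taylor_coeff G) (taylor_coeff (szego_kernel a))"
    using parseval_circle[OF G holomorphic_on_szego_kernel[OF a] assms(4)]
    by (rule has_integral_unique)
  also have "l2_inner (taylor_coeff G) (taylor_coeff (szego_kernel a)) = G a"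
    using \<open>norm a < 1\<close>
    by (intro szego_kernel_reproducing holomorphic_on_subset[OF G]) (use assms(4) in auto)
  finally show ?thesis by simp
qed

lemma toeplitz_holomorphic_symbol:
  assumes U: "U holomorphic_on ball 0 \<rho>" and "1 < \<rho>" and G: "G holomorphic_on ball 0 1"
    and z: "z \<in> ball 0 1"
  shows "toeplitz U G z = U z * G z"
proof -
  have U1: "U holomorphic_on ball 0 1" by (rule holomorphic_on_subset[OF U]) (use assms(2) in auto)
  have fourier: "fourier_coeff U k = (if k \<ge> 0 then taylor_coeff U (nat k) else 0)" for k
    using integral_unique[OF fourier_integral_holomorphic[OF U assms(2), of k]]
    unfolding fourier_coeff_def by auto
  have coeff: "(\<Sum>n. fourier_coeff U (int m - int n) * taylor_coeff G n)
      = (\<Sum>n\<le>m. taylor_coeff G n * taylor_coeff U (m - n))" for m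
  proof -
    have "(\<Sum>n. fourier_coeff U (int m - int n) * taylor_coeff G n)
        = (\<Sum>n\<le>m. fourier_coeff U (int m - int n) * taylor_coeff G n)"
      by (rule suminf_finite) (auto simp: fourier)
    also have "\<dots> = (\<Sum>n\<le>m. taylor_coeff G n * taylor_coeff U (m - n))"
      by (intro sum.cong refl) (auto simp: fourier nat_diff_distrib)
    finally show ?thesis .
  qed
  have "(\<lambda>k. \<Sum>i\<le>k. (taylor_coeff G i * z ^ i) * (taylor_coeff U (k - i) * z ^ (k - i)))
      sums ((\<Sum>k. taylor_coeff G k * z ^ k) * (\<Sum>k. taylor_coeff U k * z ^ k))"
    using z by (intro Cauchy_product_sums summable_norm_taylor_series[OF G]
        summable_norm_taylor_series[OF U1]) auto
  moreover have "(\<Sum>k. taylor_coeff G k * z ^ k) = G z" "(\<Sum>k. taylor_coeff U k * z ^ k) = U z"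
    using taylor_coeff_sums[OF G z] taylor_coeff_sums[OF U1 z] by (simp_all add: sums_iff)
  moreover have "(\<Sum>i\<le>k. (taylor_coeff G i * z ^ i) * (taylor_coeff U (k - i) * z ^ (k - i)))
      = (\<Sum>n. fourier_coeff U (int k - int n) * taylor_coeff G n) * z ^ k" for k
    unfolding coeff sum_distrib_right
    by (intro sum.cong refl) (simp add: mult_ac flip: power_add)
  ultimately show ?thesis unfolding toeplitz_def by (simp add: sums_iff mult.commute)
qed

section \<open>The orthonormal system of a finite Blaschke product\<close>

lemma blaschke_factor_norm_identity:
  fixes a z :: complex
  shows "(norm (1 - cnj a * z))\<^sup>2 - (norm (z - a))\<^sup>2 = (1 - (norm a)\<^sup>2) * (1 - (norm z)\<^sup>2)"
proof -
  have "complex_of_real ((norm (1 - cnj a * z))\<^sup>2 - (norm (z - a))\<^sup>2)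
      = (1 - cnj a * z) * cnj (1 - cnj a * z) - (z - a) * cnj (z - a)"
    by (simp only: of_real_diff complex_norm_square)
  also have "\<dots> = (1 - a * cnj a) * (1 - z * cnj z)" by (simp add: algebra_simps)
  also have "\<dots> = complex_of_real ((1 - (norm a)\<^sup>2) * (1 - (norm z)\<^sup>2))"
    by (simp only: of_real_mult of_real_diff of_real_1 complex_norm_square)
  finally show ?thesis by (simp only: of_real_eq_iff)
qed

locale finite_blaschke =
  fixes lam :: complex and zs :: "nat \<Rightarrow> complex" and n :: nat
  assumes n_pos: "n \<ge> 1" and norm_lam: "norm lam = 1"
    and norm_zeros: "\<forall>k\<in>{1..n}. norm (zs k) < 1"
begin

abbreviation R :: "complex \<Rightarrow> complex" where "R \<equiv> blaschke lam zs n"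

abbreviation u :: "nat \<Rightarrow> complex \<Rightarrow> complex" where "u \<equiv> ufun zs"

definition bfactor :: "nat \<Rightarrow> complex \<Rightarrow> complex" where
  "bfactor k z = (z - zs k) / (1 - cnj (zs k) * z)"

definition bprod :: "nat set \<Rightarrow> complex \<Rightarrow> complex" where
  "bprod S z = (\<Prod>k\<in>S. bfactor k z)"

definition kernel_scale :: "nat \<Rightarrow> complex" where
  "kernel_scale k = complex_of_real (sqrt (1 - (norm (zs k))\<^sup>2))"

definition basis :: "nat \<Rightarrow> nat \<Rightarrow> complex \<Rightarrow> complex" where
  "basis i m z = u i z * R z ^ m"

text \<open>All functions below are holomorphic on the disk of this radius, which exceeds 1.\<close>

definition radius :: real where
  "radius = 2 / (1 + Max ((\<lambda>k. norm (zs k)) ` {1..n}))"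

lemma norm_zero_less_1: "k \<in> {1..n} \<Longrightarrow> norm (zs k) < 1"
  using norm_zeros by auto

lemma radius_bounds: "1 < radius" "\<And>k. k \<in> {1..n} \<Longrightarrow> norm (zs k) * radius < 1"
proof -
  define \<mu> where "\<mu> = Max ((\<lambda>k. norm (zs k)) ` {1..n})"
  have le_\<mu>: "norm (zs k) \<le> \<mu>" if "k \<in> {1..n}" for k
    unfolding \<mu>_def using that by (intro Max_ge) auto
  have "\<mu> < 1" unfolding \<mu>_def using n_pos norm_zeros by (subst Max_less_iff) auto
  moreover have "0 \<le> \<mu>" using order_trans[OF norm_ge_zero le_\<mu>[of 1]] n_pos by auto
  ultimately show "1 < radius" unfolding radius_def \<mu>_def[symmetric] by (simp add: field_simps)
  fix k assume "k \<in> {1..n}"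
  hence "norm (zs k) * radius \<le> \<mu> * radius"
    using \<open>0 \<le> \<mu>\<close> unfolding radius_def \<mu>_def[symmetric] by (intro mult_right_mono le_\<mu>) auto
  also have "\<dots> < 1" unfolding radius_def \<mu>_def[symmetric]
    using \<open>\<mu> < 1\<close> \<open>0 \<le> \<mu>\<close> by (simp add: field_simps)
  finally show "norm (zs k) * radius < 1" .
qed

lemma denominator_nonzero:
  assumes "k \<in> {1..n}" "norm z < radius"
  shows "1 - cnj (zs k) * z \<noteq> 0"
proof -
  have "norm (cnj (zs k) * z) \<le> norm (zs k) * radius"
    using assms(2) by (simp add: norm_mult mult_left_mono)
  thus ?thesis using radius_bounds(2)[OF assms(1)] by auto
qed

lemma holomorphic_szego_kernel_zero: "k \<in> {1..n} \<Longrightarrow> szego_kernel (zs k) holomorphic_on ball 0 radius"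
  using radius_bounds(2) by (intro holomorphic_on_szego_kernel less_imp_le)

lemma holomorphic_bprod: "S \<subseteq> {1..n} \<Longrightarrow> bprod S holomorphic_on ball 0 radius"
  unfolding bprod_def[abs_def] bfactor_def using denominator_nonzero
  by (intro holomorphic_intros) auto

lemma R_eq: "R z = lam * bprod {1..n} z"
  unfolding blaschke_def bprod_def bfactor_def by simp

lemma u_eq: "u i z = kernel_scale i * szego_kernel (zs i) z * bprod {1..<i} z"
  unfolding ufun_def kernel_scale_def szego_kernel_def bprod_def bfactor_def by simp

lemma holomorphic_R: "R holomorphic_on ball 0 radius"
  unfolding R_eq by (intro holomorphic_intros holomorphic_bprod) auto

lemma holomorphic_u: "i \<in> {1..n} \<Longrightarrow> u i holomorphic_on ball 0 radius"
  unfolding u_eq by (intro holomorphic_intros holomorphic_bprod holomorphic_szego_kernel_zero) auto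

lemma holomorphic_basis: "i \<in> {1..n} \<Longrightarrow> basis i m holomorphic_on ball 0 radius"
  unfolding basis_def[abs_def] by (intro holomorphic_intros holomorphic_u holomorphic_R)

lemma holomorphic_basis_disk: "i \<in> {1..n} \<Longrightarrow> basis i m holomorphic_on ball 0 1"
  by (rule holomorphic_on_subset[OF holomorphic_basis]) (use radius_bounds(1) in auto)

lemma basis_in_H2: "i \<in> {1..n} \<Longrightarrow> basis i m \<in> H2"
  using H2_if_holomorphic_on_larger_ball[OF holomorphic_basis radius_bounds(1)] .

lemma kernel_scale_sq: "k \<in> {1..n} \<Longrightarrow> kernel_scale k * kernel_scale k = 1 - (norm (zs k))\<^sup>2"
  unfolding kernel_scale_def using norm_zero_less_1[of k]
  by (simp add: abs_square_le_1 less_imp_le flip: of_real_mult)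

lemma bprod_split: "a \<le> b \<Longrightarrow> b \<le> c \<Longrightarrow> bprod {a..<b} z * bprod {b..<c} z = bprod {a..<c} z"
  unfolding bprod_def by (rule prod.atLeastLessThan_concat)

lemma R_split: "1 \<le> j \<Longrightarrow> j \<le> Suc n \<Longrightarrow> R z = lam * bprod {1..<j} z * bprod {j..<Suc n} z"
  unfolding R_eq mult.assoc bprod_split by (simp add: atLeastLessThanSuc_atLeastAtMost)

lemma bprod_zero: "j \<in> S \<Longrightarrow> finite S \<Longrightarrow> bprod S (zs j) = 0"
  unfolding bprod_def bfactor_def by (auto simp: prod_zero_iff)

lemma bprod_circle:
  assumes "S \<subseteq> {1..n}" "norm w = 1"
  shows "bprod S w \<noteq> 0" "cnj (bprod S w) = 1 / bprod S w"
proof -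
  have w0: "w \<noteq> 0" using assms(2) by auto
  have "w * cnj w = 1" using complex_norm_square[of w] assms(2) by simp
  hence w: "cnj w = 1 / w" using w0 by (simp add: field_simps mult.commute)
  have factor: "bfactor k w \<noteq> 0 \<and> cnj (bfactor k w) = 1 / bfactor k w" if "k \<in> {1..n}" for k
  proof -
    have "1 - cnj (zs k) * w \<noteq> 0" using denominator_nonzero[OF that] radius_bounds(1) assms(2) by auto
    moreover have "w - zs k \<noteq> 0" using norm_zero_less_1[OF that] assms(2) by auto
    ultimately show ?thesis unfolding bfactor_def using w0 by (simp add: w field_simps)
  qed
  have "finite S" using assms(1) by (rule finite_subset) simp
  thus "bprod S w \<noteq> 0" unfolding bprod_def using assms(1) factor by (auto simp: prod_zero_iff)
  have "cnj (bprod S w) = (\<Prod>k\<in>S. 1 / bfactor k w)"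
    unfolding bprod_def cnj_prod using assms(1) factor by (intro prod.cong) auto
  thus "cnj (bprod S w) = 1 / bprod S w" unfolding bprod_def by (simp add: prod_dividef)
qed

lemma R_circle:
  assumes "norm w = 1"
  shows "R w \<noteq> 0" "cnj (R w) = 1 / R w"
proof -
  have lam0: "lam \<noteq> 0" using norm_lam by auto
  have "lam * cnj lam = 1" using complex_norm_square[of lam] norm_lam by simp
  hence "cnj lam = 1 / lam" using lam0 by (simp add: field_simps mult.commute)
  thus "R w \<noteq> 0" "cnj (R w) = 1 / R w"
    unfolding R_eq complex_cnj_mult using lam0 bprod_circle[OF order_refl assms] by simp_all
qed

lemma basis_circle:
  assumes "i \<in> {1..n}" "norm w = 1"
  shows "cnj (basis i m w) = kernel_scale i * cnj (szego_kernel (zs i) w) / (bprod {1..<i} w * R w ^ m)"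
proof -
  have "{1..<i} \<subseteq> {1..n}" using assms(1) by auto
  thus ?thesis using bprod_circle[OF _ assms(2)] R_circle[OF assms(2)]
    by (simp add: basis_def u_eq kernel_scale_def power_divide)
qed

lemma l2_inner_basis_lower:
  assumes i: "i \<in> {1..n}" and j: "j \<in> {1..n}" and "j \<le> i" "q \<le> p"
  shows "l2_inner (taylor_coeff (basis i p)) (taylor_coeff (basis j q)) = (if i = j \<and> p = q then 1 else 0)"
proof -
  define G where "G w = kernel_scale i * kernel_scale j * szego_kernel (zs i) w * bprod {j..<i} w * R w ^ (p - q)" for w
  have "{j..<i} \<subseteq> {1..n}" using i j by auto
  hence holG: "G holomorphic_on ball 0 radius" unfolding G_def[abs_def] using i
    by (intro holomorphic_intros holomorphic_szego_kernel_zero holomorphic_bprod holomorphic_R)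
  have "basis i p w * cnj (basis j q w) = G w * cnj (szego_kernel (zs j) w)" if w: "norm w = 1" for w
  proof -
    have "bprod {1..<i} w = bprod {1..<j} w * bprod {j..<i} w" using bprod_split[of 1 j i w] j \<open>j \<le> i\<close> by simp
    moreover have "R w ^ p = R w ^ q * R w ^ (p - q)" using \<open>q \<le> p\<close> by (simp flip: power_add)
    moreover have "{1..<j} \<subseteq> {1..n}" using j by auto
    hence "bprod {1..<j} w \<noteq> 0" "R w \<noteq> 0" using bprod_circle(1)[OF _ w] R_circle(1)[OF w] by auto
    ultimately show ?thesis unfolding basis_circle[OF j w] by (simp add: basis_def u_eq G_def field_simps)
  qed
  hence "l2_inner (taylor_coeff (basis i p)) (taylor_coeff (basis j q)) = G (zs j)"
    using holomorphic_basis[OF i] holomorphic_basis[OF j] holG radius_bounds j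
    by (intro l2_inner_eq_eval_if_circle_identity[where \<rho>=radius]) (auto intro: less_imp_le)
  also have "G (zs j) = (if i = j \<and> p = q then 1 else 0)"
  proof (cases "j < i")
    case True
    thus ?thesis using bprod_zero[of j "{j..<i}"] by (simp add: G_def)
  next
    case False
    hence "i = j" using \<open>j \<le> i\<close> by simp
    have "R (zs j) = 0" unfolding R_eq using bprod_zero[of j "{1..n}"] j by simp
    moreover have "(norm (zs j))\<^sup>2 \<noteq> 1" using norm_zero_less_1[OF j] by (simp add: abs_square_eq_1)
    hence "1 - (complex_of_real (norm (zs j)))\<^sup>2 \<noteq> 0"
      by (metis eq_iff_diff_eq_0 of_real_1 of_real_eq_iff of_real_power)
    ultimately show ?thesis using \<open>i = j\<close> \<open>q \<le> p\<close> kernel_scale_sq[OF j]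
      by (auto simp: G_def bprod_def szego_kernel_diagonal)
  qed
  finally show ?thesis .
qed

lemma l2_inner_basis_upper:
  assumes i: "i \<in> {1..n}" and j: "j \<in> {1..n}" and "i < j" "q < p"
  shows "l2_inner (taylor_coeff (basis i p)) (taylor_coeff (basis j q)) = 0"
proof -
  define G where "G w = kernel_scale i * kernel_scale j * szego_kernel (zs i) w * bprod {1..<i} w
                        * lam * bprod {j..<Suc n} w * R w ^ (p - q - 1)" for w
  have "{1..<i} \<subseteq> {1..n}" "{j..<Suc n} \<subseteq> {1..n}" using i j by auto
  hence holG: "G holomorphic_on ball 0 radius" unfolding G_def[abs_def] using i
    by (intro holomorphic_intros holomorphic_szego_kernel_zero holomorphic_bprod holomorphic_R)
  have "basis i p w * cnj (basis j q w) = G w * cnj (szego_kernel (zs j) w)" if w: "norm w = 1" for w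
  proof -
    obtain d where "p = Suc (q + d)" using \<open>q < p\<close> less_imp_Suc_add by blast
    hence "R w ^ p = R w ^ q * R w * R w ^ (p - q - 1)" by (simp add: power_add mult_ac)
    moreover have "R w = lam * bprod {1..<j} w * bprod {j..<Suc n} w" using R_split[of j] j by simp
    moreover have "{1..<j} \<subseteq> {1..n}" using j by auto
    hence "bprod {1..<j} w \<noteq> 0" "R w \<noteq> 0" using bprod_circle(1)[OF _ w] R_circle(1)[OF w] by auto
    ultimately show ?thesis unfolding basis_circle[OF j w]
      by (simp add: basis_def u_eq G_def field_simps)
  qed
  hence "l2_inner (taylor_coeff (basis i p)) (taylor_coeff (basis j q)) = G (zs j)"
    using holomorphic_basis[OF i] holomorphic_basis[OF j] holG radius_bounds j
    by (intro l2_inner_eq_eval_if_circle_identity[where \<rho>=radius]) (auto intro: less_imp_le)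
  also have "G (zs j) = 0" using bprod_zero[of j "{j..<Suc n}"] j by (simp add: G_def)
  finally show ?thesis .
qed

lemma l2_inner_basis:
  assumes i: "i \<in> {1..n}" and j: "j \<in> {1..n}"
  shows "l2_inner (taylor_coeff (basis i p)) (taylor_coeff (basis j q)) = (if i = j \<and> p = q then 1 else 0)"
proof -
  have swap: "l2_inner (taylor_coeff (basis i p)) (taylor_coeff (basis j q))
      = cnj (l2_inner (taylor_coeff (basis j q)) (taylor_coeff (basis i p)))"
    using basis_in_H2[OF i] basis_in_H2[OF j] by (intro l2_inner_commute) (auto simp: mem_H2_iff)
  consider "j \<le> i" "q \<le> p" | "i < j" "q < p" | "i \<le> j" "p \<le> q" | "j < i" "p < q" by linarith
  thus ?thesis
  proof cases
    case 3
    thus ?thesis unfolding swap using l2_inner_basis_lower[OF j i] by auto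
  next
    case 4
    thus ?thesis unfolding swap using l2_inner_basis_upper[OF j i] by auto
  qed (use l2_inner_basis_lower[OF i j] l2_inner_basis_upper[OF i j] in auto)
qed

lemma orthonormal_basis: "orthonormal ({1..n} \<times> UNIV) (\<lambda>(i, m). taylor_coeff (basis i m))"
  unfolding orthonormal_def using l2_inner_basis basis_in_H2 by (auto simp: mem_H2_iff)

lemma orthonormal_basis_fixed_index: "i \<in> {1..n} \<Longrightarrow> orthonormal UNIV (\<lambda>m. taylor_coeff (basis i m))"
  unfolding orthonormal_def using l2_inner_basis basis_in_H2 by (auto simp: mem_H2_iff)

lemma bfactor_defect:
  assumes k: "k \<in> {1..n}" and a: "norm a < 1"
  shows "(1 - (norm a)\<^sup>2) * (norm (kernel_scale k * szego_kernel (zs k) a))\<^sup>2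
       = 1 - (norm (bfactor k a))\<^sup>2"
proof -
  define D where "D = (norm (1 - cnj (zs k) * a))\<^sup>2"
  have "D > 0" unfolding D_def using denominator_nonzero[OF k] a radius_bounds(1) by simp
  have "(norm (kernel_scale k))\<^sup>2 = 1 - (norm (zs k))\<^sup>2"
    unfolding kernel_scale_def using norm_zero_less_1[OF k] by (simp add: abs_square_le_1 less_imp_le)
  hence "(1 - (norm a)\<^sup>2) * (norm (kernel_scale k * szego_kernel (zs k) a))\<^sup>2
      = (1 - (norm (zs k))\<^sup>2) * (1 - (norm a)\<^sup>2) / D"
    unfolding szego_kernel_def D_def by (simp add: norm_mult norm_divide power_mult_distrib power_divide)
  also have "\<dots> = (D - (norm (a - zs k))\<^sup>2) / D"
    unfolding D_def by (simp only: blaschke_factor_norm_identity)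
  also have "\<dots> = 1 - (norm (a - zs k))\<^sup>2 / D" using \<open>D > 0\<close> by (simp add: diff_divide_distrib)
  also have "(norm (a - zs k))\<^sup>2 / D = (norm (bfactor k a))\<^sup>2"
    unfolding bfactor_def D_def by (simp add: norm_divide power_divide)
  finally show ?thesis .
qed

lemma sum_norm_u_sq:
  assumes a: "norm a < 1"
  shows "m \<le> n \<Longrightarrow> (1 - (norm a)\<^sup>2) * (\<Sum>i\<in>{1..m}. (norm (u i a))\<^sup>2) = 1 - (norm (bprod {1..<Suc m} a))\<^sup>2"
proof (induction m)
  case 0
  then show ?case by (simp add: bprod_def)
next
  case (Suc m)
  have k: "Suc m \<in> {1..n}" using Suc.prems by auto
  have "(1 - (norm a)\<^sup>2) * (norm (u (Suc m) a))\<^sup>2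
      = (1 - (norm (bfactor (Suc m) a))\<^sup>2) * (norm (bprod {1..<Suc m} a))\<^sup>2"
    unfolding u_eq bfactor_defect[OF k a, symmetric] by (simp add: norm_mult power_mult_distrib)
  also have "\<dots> = (norm (bprod {1..<Suc m} a))\<^sup>2 - (norm (bprod {1..<Suc (Suc m)} a))\<^sup>2"
    by (simp add: bprod_def norm_mult power_mult_distrib algebra_simps)
  finally show ?case using Suc by (simp add: distrib_left)
qed

lemma kernel_identity:
  assumes "norm a < 1"
  shows "(1 - (norm a)\<^sup>2) * (\<Sum>i\<in>{1..n}. (norm (u i a))\<^sup>2) = 1 - (norm (R a))\<^sup>2"
proof -
  have "norm (R a) = norm (bprod {1..<Suc n} a)"
    unfolding R_eq by (simp add: norm_mult norm_lam atLeastLessThanSuc_atLeastAtMost)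
  thus ?thesis using sum_norm_u_sq[OF assms order_refl] by simp
qed

lemma sum_norm_u_sq_pos:
  assumes a: "norm a < 1"
  shows "(\<Sum>i\<in>{1..n}. (norm (u i a))\<^sup>2) > 0"
proof -
  have one: "1 \<in> {1..n}" using n_pos by auto
  have "(norm (zs 1))\<^sup>2 < 1" using norm_zero_less_1[OF one] by (simp add: abs_square_less_1)
  hence "kernel_scale 1 \<noteq> 0" unfolding kernel_scale_def by simp
  moreover have "1 - cnj (zs 1) * a \<noteq> 0" using denominator_nonzero[OF one] a radius_bounds(1) by auto
  ultimately have "(norm (u 1 a))\<^sup>2 > 0" unfolding u_eq szego_kernel_def bprod_def by simp
  also have "(norm (u 1 a))\<^sup>2 \<le> (\<Sum>i\<in>{1..n}. (norm (u i a))\<^sup>2)"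
    using one by (intro member_le_sum) auto
  finally show ?thesis .
qed

lemma norm_R_less_1:
  assumes "norm a < 1"
  shows "norm (R a) < 1"
proof -
  have "1 - (norm a)\<^sup>2 > 0" using assms by (simp add: abs_square_less_1)
  hence "1 - (norm (R a))\<^sup>2 > 0"
    using kernel_identity[OF assms] sum_norm_u_sq_pos[OF assms] by (metis mult_pos_pos)
  thus ?thesis by (simp add: abs_square_less_1)
qed

definition basis_coeff :: "(complex \<Rightarrow> complex) \<Rightarrow> nat \<Rightarrow> nat \<Rightarrow> complex" where
  "basis_coeff f i m = l2_inner (taylor_coeff f) (taylor_coeff (basis i m))"

lemma basis_coeff_szego_kernel:
  assumes i: "i \<in> {1..n}" and a: "norm a < 1"
  shows "basis_coeff (szego_kernel a) i m = cnj (basis i m a)"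
proof -
  have "l2_inner (taylor_coeff (basis i m)) (taylor_coeff (szego_kernel a)) = basis i m a"
    by (rule szego_kernel_reproducing[OF holomorphic_basis_disk[OF i] a])
  thus ?thesis unfolding basis_coeff_def
    using l2_inner_commute[OF szego_kernel_sqnorm(1)[OF a]] basis_in_H2[OF i]
    by (simp add: mem_H2_iff)
qed

lemma sum_basis_coeff_szego_kernel_tendsto:
  assumes a: "norm a < 1"
  shows "(\<lambda>M. \<Sum>(i, m)\<in>{1..n} \<times> {..<M}. (norm (basis_coeff (szego_kernel a) i m))\<^sup>2)
           \<longlonglongrightarrow> l2_sqnorm (taylor_coeff (szego_kernel a))"
proof -
  define r where "r = (norm (R a))\<^sup>2"
  define S where "S = (\<Sum>i\<in>{1..n}. (norm (u i a))\<^sup>2)"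
  have r: "0 \<le> r" "r < 1" unfolding r_def using norm_R_less_1[OF a] by (auto simp: abs_square_less_1)
  have coeff: "(norm (basis_coeff (szego_kernel a) i m))\<^sup>2 = (norm (u i a))\<^sup>2 * r ^ m"
    if "i \<in> {1..n}" for i m
    unfolding basis_coeff_szego_kernel[OF that a] r_def basis_def
    by (simp add: norm_mult norm_power power_mult_distrib flip: power_mult add: mult.commute)
  have sum_eq: "(\<Sum>(i, m)\<in>{1..n} \<times> {..<M}. (norm (basis_coeff (szego_kernel a) i m))\<^sup>2)
      = S * (\<Sum>m<M. r ^ m)" for M
  proof -
    have "(\<Sum>(i, m)\<in>{1..n} \<times> {..<M}. (norm (basis_coeff (szego_kernel a) i m))\<^sup>2)
        = (\<Sum>i\<in>{1..n}. \<Sum>m<M. (norm (basis_coeff (szego_kernel a) i m))\<^sup>2)"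
      by (rule sum.cartesian_product[symmetric])
    also have "\<dots> = (\<Sum>i\<in>{1..n}. (norm (u i a))\<^sup>2 * (\<Sum>m<M. r ^ m))"
      by (intro sum.cong refl) (simp add: coeff sum_distrib_left)
    finally show ?thesis by (simp add: S_def sum_distrib_right)
  qed
  have "(\<lambda>M. \<Sum>m<M. r ^ m) \<longlonglongrightarrow> 1 / (1 - r)"
    using geometric_sums[of r] r unfolding sums_def by simp
  hence "(\<lambda>M. S * (\<Sum>m<M. r ^ m)) \<longlonglongrightarrow> S * (1 / (1 - r))" by (rule tendsto_mult_left)
  moreover have "1 - r = S * (1 - (norm a)\<^sup>2)"
    using kernel_identity[OF a] unfolding r_def S_def by (simp only: mult.commute)
  hence "S * (1 / (1 - r)) = l2_sqnorm (taylor_coeff (szego_kernel a))"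
    using sum_norm_u_sq_pos[OF a] unfolding S_def[symmetric] szego_kernel_sqnorm(2)[OF a] by simp
  ultimately show ?thesis unfolding sum_eq by simp
qed

definition basis_projection :: "nat \<Rightarrow> (complex \<Rightarrow> complex) \<Rightarrow> nat \<Rightarrow> complex" where
  "basis_projection M F k = (\<Sum>(i, m)\<in>{1..n} \<times> {..<M}. basis_coeff F i m * taylor_coeff (basis i m) k)"

lemma square_summable_basis_projection: "square_summable (basis_projection M F)"
  unfolding basis_projection_def[abs_def] split_def using basis_in_H2
  by (intro square_summable_lincomb) (auto simp: mem_H2_iff)

lemma l2_inner_basis_projection:
  assumes "square_summable (taylor_coeff f)"
  shows "l2_inner (taylor_coeff f) (basis_projection M F)
       = (\<Sum>(i, m)\<in>{1..n} \<times> {..<M}. cnj (basis_coeff F i m) * basis_coeff f i m)"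
  unfolding basis_projection_def[abs_def] split_def basis_coeff_def[of f] using basis_in_H2 assms
  by (subst l2_inner_lincomb_right) (auto simp: mem_H2_iff)

lemma basis_projection_szego_kernel_tendsto:
  assumes a: "norm a < 1"
  shows "(\<lambda>M. l2_sqnorm (\<lambda>k. basis_projection M (szego_kernel a) k - taylor_coeff (szego_kernel a) k))
           \<longlonglongrightarrow> 0"
proof -
  define y where "y = taylor_coeff (szego_kernel a)"
  define v where "v = (\<lambda>(i, m). taylor_coeff (basis i m))"
  define J where "J M = {1..n} \<times> {..<M}" for M :: nat
  have y: "square_summable y" unfolding y_def using szego_kernel_sqnorm(1)[OF a] .
  have on: "orthonormal (J M) v" for M
    unfolding v_def J_def by (rule orthonormal_subset[OF orthonormal_basis]) auto
  have "basis_projection M (szego_kernel a) = (\<lambda>k. \<Sum>j\<in>J M. l2_inner y (v j) * v j k)"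
    and "(\<Sum>j\<in>J M. (norm (l2_inner y (v j)))\<^sup>2)
       = (\<Sum>(i, m)\<in>{1..n} \<times> {..<M}. (norm (basis_coeff (szego_kernel a) i m))\<^sup>2)" for M
    unfolding basis_projection_def[abs_def] J_def y_def v_def basis_coeff_def
    by (auto intro!: sum.cong)
  hence "l2_sqnorm (\<lambda>k. basis_projection M (szego_kernel a) k - y k)
      = l2_sqnorm y - (\<Sum>(i, m)\<in>{1..n} \<times> {..<M}. (norm (basis_coeff (szego_kernel a) i m))\<^sup>2)" for M
    using l2_sqnorm_Bessel[OF _ on y, of M] unfolding J_def l2_sqnorm_def
    by (simp add: norm_minus_commute)
  moreover have "(\<lambda>M. l2_sqnorm y - (\<Sum>(i, m)\<in>{1..n} \<times> {..<M}. (norm (basis_coeff (szego_kernel a) i m))\<^sup>2))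
      \<longlonglongrightarrow> l2_sqnorm y - l2_sqnorm y"
    using sum_basis_coeff_szego_kernel_tendsto[OF a] unfolding y_def by (intro tendsto_diff tendsto_const)
  ultimately show ?thesis unfolding y_def by simp
qed

lemma basis_expansion:
  assumes f: "f \<in> H2" and a: "norm a < 1"
  shows "(\<lambda>M. \<Sum>i\<in>{1..n}. \<Sum>m<M. basis_coeff f i m * basis i m a) \<longlonglongrightarrow> f a"
proof -
  have f_coeffs: "square_summable (taylor_coeff f)" using f unfolding mem_H2_iff by simp
  have "(\<lambda>M. l2_inner (taylor_coeff f) (basis_projection M (szego_kernel a)))
          \<longlonglongrightarrow> l2_inner (taylor_coeff f) (taylor_coeff (szego_kernel a))"
    by (rule l2_inner_tendsto_right[OF f_coeffs szego_kernel_sqnorm(1)[OF a]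
          square_summable_basis_projection basis_projection_szego_kernel_tendsto[OF a]])
  moreover have "l2_inner (taylor_coeff f) (taylor_coeff (szego_kernel a)) = f a"
    using f a by (intro szego_kernel_reproducing) (auto simp: mem_H2_iff)
  moreover have "l2_inner (taylor_coeff f) (basis_projection M (szego_kernel a))
      = (\<Sum>i\<in>{1..n}. \<Sum>m<M. basis_coeff f i m * basis i m a)" for M
    unfolding l2_inner_basis_projection[OF f_coeffs] sum.cartesian_product[symmetric]
    by (intro sum.cong refl) (simp add: basis_coeff_szego_kernel a mult.commute)
  ultimately show ?thesis by simp
qed

section \<open>The operators T_{u_i} C_R\<close>

definition weighted_comp :: "nat \<Rightarrow> (complex \<Rightarrow> complex) \<Rightarrow> complex \<Rightarrow> complex" where
  "weighted_comp i g z = u i z * g (R z)"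

definition weighted_comp_partial :: "nat \<Rightarrow> (complex \<Rightarrow> complex) \<Rightarrow> nat \<Rightarrow> complex \<Rightarrow> complex" where
  "weighted_comp_partial i g N z = (\<Sum>m<N. taylor_coeff g m * basis i m z)"

definition coeff_tail :: "(complex \<Rightarrow> complex) \<Rightarrow> nat \<Rightarrow> real" where
  "coeff_tail g N = l2_sqnorm (taylor_coeff g) - (\<Sum>m<N. (norm (taylor_coeff g m))\<^sup>2)"

lemma coeff_tail_tendsto_0:
  assumes "g \<in> H2"
  shows "coeff_tail g \<longlonglongrightarrow> 0"
proof -
  have "(\<lambda>N. \<Sum>m<N. (norm (taylor_coeff g m))\<^sup>2) \<longlonglongrightarrow> l2_sqnorm (taylor_coeff g)"
    using assms unfolding mem_H2_iff square_summable_def l2_sqnorm_def by (intro summable_LIMSEQ) simp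
  from tendsto_diff[OF tendsto_const[of "l2_sqnorm (taylor_coeff g)"] this] show ?thesis
    unfolding coeff_tail_def[abs_def] by simp
qed

lemma taylor_coeff_weighted_comp_partial:
  "i \<in> {1..n} \<Longrightarrow>
    taylor_coeff (weighted_comp_partial i g N) = (\<lambda>k. \<Sum>m<N. taylor_coeff g m * taylor_coeff (basis i m) k)"
  unfolding weighted_comp_partial_def[abs_def]
  by (rule ext, rule taylor_coeff_lincomb) (use holomorphic_basis_disk in auto)

lemma holomorphic_weighted_comp_partial:
  "i \<in> {1..n} \<Longrightarrow> weighted_comp_partial i g N holomorphic_on ball 0 1"
  unfolding weighted_comp_partial_def[abs_def] by (intro holomorphic_intros holomorphic_basis_disk)

lemma square_summable_weighted_comp_partial:
  "i \<in> {1..n} \<Longrightarrow> square_summable (taylor_coeff (weighted_comp_partial i g N))"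
  unfolding taylor_coeff_weighted_comp_partial
  using basis_in_H2 by (intro square_summable_lincomb) (auto simp: mem_H2_iff)

lemma weighted_comp_partial_Cauchy:
  assumes i: "i \<in> {1..n}" and g: "g \<in> H2" and "N \<le> M"
  shows "l2_sqnorm (\<lambda>k. taylor_coeff (weighted_comp_partial i g M) k
                       - taylor_coeff (weighted_comp_partial i g N) k) \<le> coeff_tail g N"
proof -
  have split: "(\<Sum>m<M. f m) = (\<Sum>m<N. f m) + (\<Sum>m\<in>{N..<M}. f m)" for f :: "nat \<Rightarrow> 'a::comm_monoid_add"
    using \<open>N \<le> M\<close> by (metis atLeast0LessThan sum.atLeastLessThan_concat zero_le)
  have "l2_sqnorm (\<lambda>k. taylor_coeff (weighted_comp_partial i g M) k - taylor_coeff (weighted_comp_partial i g N) k)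
      = l2_sqnorm (\<lambda>k. \<Sum>m\<in>{N..<M}. taylor_coeff g m * taylor_coeff (basis i m) k)"
    unfolding taylor_coeff_weighted_comp_partial[OF i] by (simp add: split)
  also have "\<dots> = (\<Sum>m\<in>{N..<M}. (norm (taylor_coeff g m))\<^sup>2)"
    by (rule l2_sqnorm_orthonormal_lincomb[OF _ orthonormal_subset[OF orthonormal_basis_fixed_index[OF i]]])
       auto
  also have "\<dots> \<le> coeff_tail g N"
    using sum_le_l2_sqnorm[of "taylor_coeff g" "{..<M}"] g
    unfolding coeff_tail_def mem_H2_iff by (simp add: split)
  finally show ?thesis .
qed

lemma holomorphic_comp_blaschke:
  assumes "g holomorphic_on ball 0 1"
  shows "(\<lambda>z. g (R z)) holomorphic_on ball 0 1"
proof -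
  have "R holomorphic_on ball 0 1"
    by (rule holomorphic_on_subset[OF holomorphic_R]) (use radius_bounds(1) in auto)
  moreover have "R ` ball 0 1 \<subseteq> ball 0 1" using norm_R_less_1 by auto
  ultimately have "(g \<circ> R) holomorphic_on ball 0 1"
    using holomorphic_on_compose_gen[OF _ assms] by blast
  thus ?thesis by (simp add: o_def)
qed

lemma holomorphic_weighted_comp:
  assumes "i \<in> {1..n}" "g holomorphic_on ball 0 1"
  shows "weighted_comp i g holomorphic_on ball 0 1"
proof -
  have "u i holomorphic_on ball 0 1"
    by (rule holomorphic_on_subset[OF holomorphic_u[OF assms(1)]]) (use radius_bounds(1) in auto)
  thus ?thesis unfolding weighted_comp_def[abs_def]
    by (intro holomorphic_intros holomorphic_comp_blaschke assms(2))
qed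

lemma weighted_comp_partial_tendsto:
  assumes "g holomorphic_on ball 0 1" "z \<in> ball 0 1"
  shows "(\<lambda>N. weighted_comp_partial i g N z) \<longlonglongrightarrow> weighted_comp i g z"
proof -
  have "(\<lambda>m. taylor_coeff g m * R z ^ m) sums g (R z)"
    using assms norm_R_less_1[of z] by (intro taylor_coeff_sums) auto
  hence "(\<lambda>m. u i z * (taylor_coeff g m * R z ^ m)) sums (u i z * g (R z))" by (rule sums_mult)
  thus ?thesis
    unfolding weighted_comp_partial_def weighted_comp_def basis_def sums_def
    by (simp add: sum_distrib_left mult_ac)
qed

text \<open>The partial sums \<Sum>_{m<N} g_m e_{i,m} are Cauchy in H^2 by orthonormality; their limit is
  u_i (g \<circ> R).\<close>

lemma weighted_comp_approx:
  assumes i: "i \<in> {1..n}" and g: "g \<in> H2"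
  shows "weighted_comp i g \<in> H2"
    and "l2_sqnorm (\<lambda>k. taylor_coeff (weighted_comp_partial i g N) k - taylor_coeff (weighted_comp i g) k)
           \<le> coeff_tail g N"
proof -
  have hol_g: "g holomorphic_on ball 0 1" using g unfolding mem_H2_iff by simp
  obtain d where d: "square_summable d"
    and close: "\<And>N. l2_sqnorm (\<lambda>k. d k - taylor_coeff (weighted_comp_partial i g N) k) \<le> coeff_tail g N"
    using square_summable_complete[OF square_summable_weighted_comp_partial[OF i]
        coeff_tail_tendsto_0[OF g] weighted_comp_partial_Cauchy[OF i g]] by blast
  have close': "l2_sqnorm (\<lambda>k. taylor_coeff (weighted_comp_partial i g N) k - d k) \<le> coeff_tail g N" for N
    using close[of N] unfolding l2_sqnorm_def by (simp add: norm_minus_commute)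
  have "(\<lambda>N. l2_sqnorm (\<lambda>k. taylor_coeff (weighted_comp_partial i g N) k - d k)) \<longlonglongrightarrow> 0"
    using close' d square_summable_weighted_comp_partial[OF i]
    by (intro tendsto_sandwich[OF _ _ tendsto_const coeff_tail_tendsto_0[OF g]] always_eventually allI
        l2_sqnorm_nonneg square_summable_diff) auto
  hence tc: "taylor_coeff (weighted_comp i g) = d"
    using d holomorphic_weighted_comp_partial[OF i] square_summable_weighted_comp_partial[OF i]
      weighted_comp_partial_tendsto[OF hol_g]
    by (intro taylor_coeff_eq_l2_limit) auto
  show "weighted_comp i g \<in> H2"
    unfolding mem_H2_iff tc using holomorphic_weighted_comp[OF i hol_g] d by simp
  show "l2_sqnorm (\<lambda>k. taylor_coeff (weighted_comp_partial i g N) k - taylor_coeff (weighted_comp i g) k)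
          \<le> coeff_tail g N"
    unfolding tc by (rule close')
qed

lemma square_summable_basis_coeff:
  "i \<in> {1..n} \<Longrightarrow> square_summable (taylor_coeff f) \<Longrightarrow> square_summable (basis_coeff f i)"
  unfolding basis_coeff_def[abs_def]
  by (rule square_summable_orthonormal_coeffs[OF orthonormal_basis_fixed_index])

lemma weighted_comp_partial_tendsto_l2:
  assumes i: "i \<in> {1..n}" and g: "g \<in> H2"
  shows "(\<lambda>N. l2_sqnorm (\<lambda>k. taylor_coeff (weighted_comp_partial i g N) k
                            - taylor_coeff (weighted_comp i g) k)) \<longlonglongrightarrow> 0"
proof (rule tendsto_sandwich[OF _ _ tendsto_const coeff_tail_tendsto_0[OF g]])
  have "square_summable (taylor_coeff (weighted_comp i g))"
    using weighted_comp_approx(1)[OF i g] unfolding mem_H2_iff by simp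
  thus "eventually (\<lambda>N. 0 \<le> l2_sqnorm (\<lambda>k. taylor_coeff (weighted_comp_partial i g N) k
                                          - taylor_coeff (weighted_comp i g) k)) sequentially"
    by (intro always_eventually allI l2_sqnorm_nonneg square_summable_diff
        square_summable_weighted_comp_partial[OF i])
  show "eventually (\<lambda>N. l2_sqnorm (\<lambda>k. taylor_coeff (weighted_comp_partial i g N) k
                                     - taylor_coeff (weighted_comp i g) k) \<le> coeff_tail g N) sequentially"
    by (intro always_eventually allI weighted_comp_approx(2)[OF i g])
qed

lemma l2_inner_weighted_comp:
  assumes i: "i \<in> {1..n}" and g: "g \<in> H2" and f: "square_summable (taylor_coeff f)"
  shows "l2_inner (taylor_coeff (weighted_comp i g)) (taylor_coeff f) = l2_inner (taylor_coeff g) (basis_coeff f i)"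
proof -
  have g_coeffs: "square_summable (taylor_coeff g)" using g unfolding mem_H2_iff by simp
  have basis_coeffs: "square_summable (taylor_coeff (basis i m))" for m
    using basis_in_H2[OF i] unfolding mem_H2_iff by simp
  have "(\<lambda>N. l2_inner (taylor_coeff (weighted_comp_partial i g N)) (taylor_coeff f))
          \<longlonglongrightarrow> l2_inner (taylor_coeff (weighted_comp i g)) (taylor_coeff f)"
    using weighted_comp_approx(1)[OF i g] f square_summable_weighted_comp_partial[OF i]
      weighted_comp_partial_tendsto_l2[OF i g]
    by (intro l2_inner_tendsto_left) (auto simp: mem_H2_iff)
  moreover have "l2_inner (taylor_coeff (weighted_comp_partial i g N)) (taylor_coeff f)
      = (\<Sum>m<N. taylor_coeff g m * cnj (basis_coeff f i m))" for N
    unfolding taylor_coeff_weighted_comp_partial[OF i] basis_coeff_def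
    using basis_coeffs f by (simp add: l2_inner_lincomb_left l2_inner_commute[of _ "taylor_coeff f"])
  moreover have "(\<lambda>N. \<Sum>m<N. taylor_coeff g m * cnj (basis_coeff f i m)) \<longlonglongrightarrow> l2_inner (taylor_coeff g) (basis_coeff f i)"
    using l2_inner_sums[OF g_coeffs square_summable_basis_coeff[OF i f]] unfolding sums_def .
  ultimately show ?thesis using LIMSEQ_unique by fastforce
qed

lemma basis_coeff_weighted_comp:
  assumes i: "i \<in> {1..n}" and j: "j \<in> {1..n}" and h: "h \<in> H2"
  shows "basis_coeff (weighted_comp j h) i = (if i = j then taylor_coeff h else (\<lambda>_. 0))"
proof
  fix m
  have "basis_coeff (basis i m) j = (\<lambda>l. if i = j \<and> l = m then 1 else 0)"
    unfolding basis_coeff_def using l2_inner_basis[OF i j] by auto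
  moreover have "basis_coeff (weighted_comp j h) i m = l2_inner (taylor_coeff h) (basis_coeff (basis i m) j)"
    unfolding basis_coeff_def[of _ i]
    using basis_in_H2[OF i] by (intro l2_inner_weighted_comp[OF j h]) (simp add: mem_H2_iff)
  ultimately show "basis_coeff (weighted_comp j h) i m = (if i = j then taylor_coeff h else (\<lambda>_. 0)) m"
    by (auto simp: l2_inner_delta_right l2_inner_def[of _ "\<lambda>_. 0"])
qed

abbreviation toeplitz_comp :: "nat \<Rightarrow> (complex \<Rightarrow> complex) \<Rightarrow> complex \<Rightarrow> complex" where
  "toeplitz_comp i \<equiv> \<lambda>g. toeplitz (u i) (comp_op R g)"

lemma toeplitz_comp_eq_weighted_comp:
  assumes "i \<in> {1..n}" "g holomorphic_on ball 0 1" "z \<in> ball 0 1"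
  shows "toeplitz_comp i g z = weighted_comp i g z"
  using toeplitz_holomorphic_symbol[OF holomorphic_u[OF assms(1)] radius_bounds(1) _ assms(3)]
    holomorphic_comp_blaschke[OF assms(2)]
  by (simp add: comp_op_def weighted_comp_def)

lemma taylor_coeff_toeplitz_comp:
  assumes "i \<in> {1..n}" "g \<in> H2"
  shows "taylor_coeff (toeplitz_comp i g) = taylor_coeff (weighted_comp i g)"
  using assms toeplitz_comp_eq_weighted_comp
  by (intro ext taylor_coeff_cong[of 1]) (auto simp: mem_H2_iff)

lemma h2_adjoint_toeplitz_comp:
  assumes i: "i \<in> {1..n}" and F: "square_summable (taylor_coeff F)"
  shows "h2_adjoint (toeplitz_comp i) F = (\<lambda>w. if w \<in> ball 0 1 then \<Sum>m. basis_coeff F i m * w ^ m else 0)"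
    (is "_ = ?P")
proof (rule h2_adjoint_eqI)
  note P = power_series_in_H2[OF square_summable_basis_coeff[OF i F]]
  show "?P \<in> H2" by (rule P(1))
  show "\<forall>z. z \<notin> ball 0 1 \<longrightarrow> ?P z = 0" by simp
  show "\<forall>g\<in>H2. h2_inner (toeplitz_comp i g) F = h2_inner g ?P"
    unfolding h2_inner_eq_l2_inner P(2)
    using taylor_coeff_toeplitz_comp[OF i] l2_inner_weighted_comp[OF i _ F] by simp
qed

lemma toeplitz_comp_adjoint_toeplitz_comp:
  assumes i: "i \<in> {1..n}" and j: "j \<in> {1..n}" and f: "f \<in> H2" and z: "z \<in> ball 0 1"
  shows "h2_adjoint (toeplitz_comp i) (toeplitz_comp j f) z = (if i = j then f z else 0)"
proof -
  have tc: "taylor_coeff (toeplitz_comp j f) = taylor_coeff (weighted_comp j f)"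
    by (rule taylor_coeff_toeplitz_comp[OF j f])
  have "square_summable (taylor_coeff (toeplitz_comp j f))"
    unfolding tc using weighted_comp_approx(1)[OF j f] by (simp add: mem_H2_iff)
  moreover have "basis_coeff (toeplitz_comp j f) i = (if i = j then taylor_coeff f else (\<lambda>_. 0))"
    using basis_coeff_weighted_comp[OF i j f] unfolding basis_coeff_def[abs_def] tc .
  moreover have "(\<Sum>m. taylor_coeff f m * z ^ m) = f z"
    using taylor_coeff_sums[of f 1 z] f z by (simp add: mem_H2_iff sums_iff)
  ultimately show ?thesis using z by (simp add: h2_adjoint_toeplitz_comp[OF i])
qed

lemma sum_toeplitz_comp_toeplitz_comp_adjoint:
  assumes f: "f \<in> H2" and z: "z \<in> ball 0 1"
  shows "(\<Sum>i=1..n. toeplitz_comp i (h2_adjoint (toeplitz_comp i) f) z) = f z"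
proof -
  have f_coeffs: "square_summable (taylor_coeff f)" using f by (simp add: mem_H2_iff)
  have Rz: "R z \<in> ball 0 1" using norm_R_less_1[of z] z by simp
  have sums: "(\<lambda>m. basis_coeff f i m * basis i m z) sums toeplitz_comp i (h2_adjoint (toeplitz_comp i) f) z"
    if i: "i \<in> {1..n}" for i
  proof -
    note P = power_series_in_H2[OF square_summable_basis_coeff[OF i f_coeffs]]
    have "(\<lambda>m. basis_coeff f i m * R z ^ m) sums (\<Sum>m. basis_coeff f i m * R z ^ m)"
      using square_summable_power_series_sums[OF square_summable_basis_coeff[OF i f_coeffs]] Rz
      by (simp add: sums_iff)
    hence "(\<lambda>m. u i z * (basis_coeff f i m * R z ^ m)) sums (u i z * (\<Sum>m. basis_coeff f i m * R z ^ m))"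
      by (rule sums_mult)
    moreover have "toeplitz_comp i (h2_adjoint (toeplitz_comp i) f) z
        = u i z * (\<Sum>m. basis_coeff f i m * R z ^ m)"
      unfolding h2_adjoint_toeplitz_comp[OF i f_coeffs]
      using toeplitz_comp_eq_weighted_comp[OF i _ z] P(1) Rz
      by (simp add: mem_H2_iff weighted_comp_def)
    ultimately show ?thesis by (simp add: basis_def mult_ac)
  qed
  have "(\<lambda>M. \<Sum>i\<in>{1..n}. \<Sum>m<M. basis_coeff f i m * basis i m z)
          \<longlonglongrightarrow> (\<Sum>i\<in>{1..n}. toeplitz_comp i (h2_adjoint (toeplitz_comp i) f) z)"
    using sums unfolding sums_def by (intro tendsto_sum) auto
  moreover have "(\<lambda>M. \<Sum>i\<in>{1..n}. \<Sum>m<M. basis_coeff f i m * basis i m z) \<longlonglongrightarrow> f z"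
    using basis_expansion[OF f] z by simp
  ultimately show ?thesis by (rule LIMSEQ_unique)
qed

end

theorem lemma3p2:
  fixes lam :: complex and zs :: "nat \<Rightarrow> complex" and n :: nat
  assumes "n \<ge> 1" and "cmod lam = 1" and "\<forall>k\<in>{1..n}. cmod (zs k) < 1"
  shows "(\<forall>i\<in>{1..n}. \<forall>j\<in>{1..n}. \<forall>f\<in>H2. \<forall>z\<in>ball 0 1.
            h2_adjoint (\<lambda>g. toeplitz (ufun zs i) (comp_op (blaschke lam zs n) g))
              (toeplitz (ufun zs j) (comp_op (blaschke lam zs n) f)) z
            = (if i = j then f z else 0))
       \<and> (\<forall>f\<in>H2. \<forall>z\<in>ball 0 1.
            (\<Sum>i=1..n. toeplitz (ufun zs i) (comp_op (blaschke lam zs n)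
               (h2_adjoint (\<lambda>g. toeplitz (ufun zs i) (comp_op (blaschke lam zs n) g)) f)) z)
            = f z)"
proof -
  interpret finite_blaschke lam zs n using assms by unfold_locales
  show ?thesis
    using toeplitz_comp_adjoint_toeplitz_comp sum_toeplitz_comp_toeplitz_comp_adjoint by blast
qed

end
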